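(* Let $N\in\mathbb{N}$ and let $\Xi_N=(\xi_k)_{k=1}^N$ be a biorthogonal ensemble on $(\mathbb{R},\mu_N)$ with correlation kernel $K_N(x,y)=\sum_{k=0}^{N-1}P^N_k(x)Q^N_k(y)$, where the functions $(P^N_k)_{k\ge0}$ satisfy the recurrence relation $x\,(P^N_0(x),P^N_1(x),\dots)^T=\mathbf{J}\,(P^N_0(x),P^N_1(x),\dots)^T$ for all $x\in\mathbb{R}$, with $\mathbf{J}=(\mathbf{J}_{ij})_{i,j\ge0}$ a band matrix: there is $W>0$ with $\mathbf{J}_{ij}=0$ whenever $|i-j|\ge W$. Let $F\in\mathbb{R}[x]$ be a polynomial and $\mathbf{M}=F(\mathbf{J})$. Then for every $n\ge2$ the $n$-th cumulant of the linear statistic $\Xi_N(F)=\sum_{k=1}^N F(\xi_k)$ is $$\operatorname{C}^n_N[F]=\sum_{\mathbf{n}\in\Lambda_n}\mho(\mathbf{n})\sum_{\pi\in\Gamma^{\mathbf{n}}_N(\mathbf{M})}\prod_{i=1}^n\mathbf{M}_{\pi(i)\pi(i-1)}.$$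
   Context: A biorthogonal family $\{P^N_k,Q^N_k\}_{k\ge0}$ on $(\mathbb{R},\mu_N)$ ($\mu_N$ a Borel measure) satisfies $P^N_kQ^N_n\in L^1(\mu_N)$ and $\int P^N_kQ^N_n\,d\mu_N=\delta_{kn}$; a biorthogonal ensemble is the determinantal point process on $(\mathbb{R},\mu_N)$ whose correlation functions with respect to $\mu_N$ are $\rho_k(x_1,\dots,x_k)=\det[K_N(x_i,x_j)]_{i,j\le k}$. The cumulants $\operatorname{C}^n_N[F]$ are defined by the formal power series $\log\mathbb{E}[e^{\lambda\Xi_N(F)}]\sim\sum_{n\ge1}\operatorname{C}^n_N[F]\lambda^n/n!$. For $n\ge2$, $\Lambda_n$ is the set of tuples $\mathbf{n}=(n_1,\dots,n_\ell)$ with $1\le\ell\le n-1$ and integers $0<n_1<\dots<n_\ell<n$; setting $k_1=n_1$, $k_i=n_i-n_{i-1}$ ($2\le i\le\ell$), $k_{\ell+1}=n-n_\ell$, define $\mho(\mathbf{n})=\frac{(-1)^{\ell+1}}{\ell+1}\frac{n!}{k_1!\cdots k_{\ell+1}!}$. For a matrix $\mathbf{M}$ indexed by $\mathbb{N}_0$ and $o\in\mathbb{Z}$, $\Gamma^{\mathbf{n}}_o(\mathbf{M})$ is the set of sequences $\pi=(\pi(0),\pi(1),\dots,\pi(n))$ of indices (paths on the directed graph with an edge $j\to i$ iff $\mathbf{M}_{ij}\neq0$) such that $\pi(0)=\pi(n)<o$ and $\max\{\pi(n_1),\dots,\pi(n_\ell)\}\ge o$. *)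

theory Defs
  imports "HOL-Probability.Probability"
    "HOL-Computational_Algebra.Formal_Power_Series"
    "HOL-Computational_Algebra.Polynomial"
    "Jordan_Normal_Form.Determinant"
begin

definition biorth_kernel :: "(nat \<Rightarrow> real \<Rightarrow> real) \<Rightarrow> (nat \<Rightarrow> real \<Rightarrow> real) \<Rightarrow> nat \<Rightarrow> real \<Rightarrow> real \<Rightarrow> real"
  where "biorth_kernel P Q N x y = (\<Sum>k<N. P k x * Q k y)"

(* Infinite matrices indexed by N_0 x N_0; product (used for band matrices,
   where the sums have finite support) *)
definition inf_mat_mult :: "(nat \<Rightarrow> nat \<Rightarrow> real) \<Rightarrow> (nat \<Rightarrow> nat \<Rightarrow> real) \<Rightarrow> nat \<Rightarrow> nat \<Rightarrow> real"
  where "inf_mat_mult A B i j = infsum (\<lambda>k. A i k * B k j) UNIV"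

fun inf_mat_pow :: "(nat \<Rightarrow> nat \<Rightarrow> real) \<Rightarrow> nat \<Rightarrow> nat \<Rightarrow> nat \<Rightarrow> real" where
  "inf_mat_pow A 0 = (\<lambda>i j. if i = j then 1 else 0)"
| "inf_mat_pow A (Suc k) = inf_mat_mult (inf_mat_pow A k) A"

definition poly_inf_mat :: "real poly \<Rightarrow> (nat \<Rightarrow> nat \<Rightarrow> real) \<Rightarrow> nat \<Rightarrow> nat \<Rightarrow> real"
  where "poly_inf_mat F A i j = (\<Sum>k\<le>degree F. coeff F k * inf_mat_pow A k i j)"

(* Lambda_n : tuples 0 < n_1 < ... < n_l < n, l >= 1, represented as sorted lists *)
definition Lambda_set :: "nat \<Rightarrow> nat list set"
  where "Lambda_set n = {ns. ns \<noteq> [] \<and> sorted_wrt (<) ns \<and> set ns \<subseteq> {1..<n}}"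

(* k_1 = n_1, k_i = n_i - n_{i-1}, k_{l+1} = n - n_l *)
definition gaps :: "nat \<Rightarrow> nat list \<Rightarrow> nat list"
  where "gaps n ns = map (\<lambda>i. (ns @ [n]) ! i - (0 # ns) ! i) [0..<length ns + 1]"

definition mho :: "nat \<Rightarrow> nat list \<Rightarrow> real"
  where "mho n ns = (-1) ^ (length ns + 1) / real (length ns + 1)
                    * fact n / (\<Prod>k\<leftarrow>gaps n ns. fact k)"

(* Gamma^{ns}_o(M): paths pi(0),...,pi(n) in the graph with edge j -> i iff M_ij \<noteq> 0,
   with pi(0) = pi(n) < o and max{pi(n_1),...,pi(n_l)} >= o *)
definition Gamma_set :: "nat \<Rightarrow> nat list \<Rightarrow> nat \<Rightarrow> (nat \<Rightarrow> nat \<Rightarrow> real) \<Rightarrow> nat list set"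
  where "Gamma_set n ns ofs M = {\<pi>. length \<pi> = n + 1
      \<and> (\<forall>i\<in>{1..n}. M (\<pi> ! i) (\<pi> ! (i - 1)) \<noteq> 0)
      \<and> \<pi> ! 0 = \<pi> ! n \<and> \<pi> ! 0 < ofs
      \<and> Max ((\<lambda>m. \<pi> ! m) ` set ns) \<ge> ofs}"

definition moment_fps :: "'a measure \<Rightarrow> ('a \<Rightarrow> real) \<Rightarrow> real fps"
  where "moment_fps S X = Abs_fps (\<lambda>m. (\<integral>\<omega>. X \<omega> ^ m \<partial>S) / fact m)"

(* n-th cumulant: n! times the n-th coefficient of the formal series log(moment series),
   log A = ln(1 + (A - 1)) *)
definition cumulant :: "'a measure \<Rightarrow> ('a \<Rightarrow> real) \<Rightarrow> nat \<Rightarrow> real"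
  where "cumulant S X n = fact n * fps_nth (fps_ln 1 oo (moment_fps S X - 1)) n"

end

theory Submission
  imports Defs
begin

text \<open>With \<open>M = F(J)\<close>, Andreief's identity turns the moment generating series of
  \<open>\<Xi>\<^sub>N(F)\<close> into \<open>det (e\<^sup>z\<^sup>M)\<close> restricted to the indices below \<open>N\<close>. Hence the cumulant
  series is \<open>log det (1 + A) = \<Sum>\<^sub>l (-1)\<^sup>l\<^sup>+\<^sup>1/l tr A\<^sup>l\<close> for the truncation \<open>A\<close> of
  \<open>e\<^sup>z\<^sup>M - 1\<close>. Extracting the coefficient of \<open>z\<^sup>n\<close> gives, for every composition
  \<open>k\<^sub>1 + \<dots> + k\<^sub>l = n\<close>, the trace of a product of truncated powers \<open>M\<^sup>k\<^sup>\<^sub>i\<close>, that is,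
  a sum over closed paths of \<open>n\<close> steps that stay below \<open>N\<close> at the break points
  \<open>k\<^sub>1, k\<^sub>1 + k\<^sub>2, \<dots>\<close>. Since \<open>M\<close> is banded these are finite sums. The coefficients of
  \<open>log e\<^sup>z = z\<close> show that the compositions with at least two parts carry total weight
  \<open>-1/n!\<close>, so subtracting each restricted path sum from the unrestricted one leaves exactly
  the paths that reach height \<open>N\<close> at one of the break points.\<close>

section \<open>Banded infinite matrices\<close>

definition banded :: "nat \<Rightarrow> (nat \<Rightarrow> nat \<Rightarrow> real) \<Rightarrow> bool" where
  "banded w A \<longleftrightarrow> (\<forall>i j. i + w \<le> j \<or> j + w \<le> i \<longrightarrow> A i j = 0)"

lemma banded_mono: "banded w A \<Longrightarrow> w \<le> w' \<Longrightarrow> banded w' A"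
  unfolding banded_def by auto

lemma inf_mat_mult_eq_sum:
  assumes "finite K" "\<And>k. k \<notin> K \<Longrightarrow> A i k * B k j = 0"
  shows "inf_mat_mult A B i j = (\<Sum>k\<in>K. A i k * B k j)"
proof -
  have "inf_mat_mult A B i j = infsum (\<lambda>k. A i k * B k j) K"
    unfolding inf_mat_mult_def by (rule infsum_cong_neutral) (use assms in auto)
  then show ?thesis using assms(1) by simp
qed

lemma inf_mat_mult_banded_eq_sum:
  assumes "banded w A" "i + w \<le> R"
  shows "inf_mat_mult A B i j = (\<Sum>k<R. A i k * B k j)"
  by (rule inf_mat_mult_eq_sum) (use assms in \<open>auto simp: banded_def\<close>)

lemma banded_inf_mat_mult:
  assumes A: "banded w1 A" and B: "banded w2 B"
  shows "banded (w1 + w2) (inf_mat_mult A B)"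
  unfolding banded_def
proof (intro allI impI)
  fix i j assume ij: "i + (w1 + w2) \<le> j \<or> j + (w1 + w2) \<le> i"
  have "A i k * B k j = 0" if "k < i + w1" for k
  proof (cases "k + w1 \<le> i")
    case True then show ?thesis using A by (simp add: banded_def)
  next
    case False
    then have "k + w2 \<le> j \<or> j + w2 \<le> k" using ij that by auto
    then have "B k j = 0" using B unfolding banded_def by blast
    then show ?thesis by simp
  qed
  then show "inf_mat_mult A B i j = 0"
    by (simp add: inf_mat_mult_banded_eq_sum[OF A, of i "i + w1"] sum.neutral)
qed

lemma banded_inf_mat_pow: "banded w A \<Longrightarrow> banded (k * w + 1) (inf_mat_pow A k)"
proof (induction k)
  case 0 then show ?case by (auto simp: banded_def)
next
  case (Suc k)
  then show ?case using banded_inf_mat_mult[OF Suc.IH[OF Suc.prems] Suc.prems]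
    by (simp add: add_ac)
qed

lemma banded_poly_inf_mat:
  assumes "banded w A"
  shows "banded (degree F * w + 1) (poly_inf_mat F A)"
proof -
  have "banded (degree F * w + 1) (inf_mat_pow A k)" if "k \<le> degree F" for k
    using banded_mono[OF banded_inf_mat_pow[OF assms, of k]] that by simp
  then show ?thesis
    unfolding banded_def poly_inf_mat_def by (auto intro!: sum.neutral)
qed

lemma recurrence_extend:
  assumes A: "banded w A" and rec: "\<And>a. g x * P a x = (\<Sum>c<a + w. A a c * P c x)"
    and R: "a + w \<le> R"
  shows "g x * P a x = (\<Sum>c<R. A a c * P c x)"
proof -
  have "(\<Sum>c<a + w. A a c * P c x) = (\<Sum>c<R. A a c * P c x)"
    by (rule sum.mono_neutral_left) (use A R in \<open>auto simp: banded_def\<close>)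
  then show ?thesis using rec by simp
qed

lemma recurrence_power:
  fixes g :: "real \<Rightarrow> real" and P :: "nat \<Rightarrow> real \<Rightarrow> real"
  assumes A: "banded w A"
    and rec: "\<And>a R. a + w \<le> R \<Longrightarrow> g x * P a x = (\<Sum>c<R. A a c * P c x)"
  shows "a + k * w + 1 \<le> R \<Longrightarrow> g x ^ k * P a x = (\<Sum>c<R. inf_mat_pow A k a c * P c x)"
proof (induction k arbitrary: R)
  case 0
  then show ?case by (simp add: if_distrib[of "\<lambda>y. y * P _ x"] cong: if_cong)
next
  case (Suc k)
  define R0 where "R0 = a + k * w + 1"
  have R0R: "R0 + w \<le> R" using Suc.prems by (simp add: R0_def algebra_simps)
  have "g x ^ Suc k * P a x = g x * (\<Sum>c<R0. inf_mat_pow A k a c * P c x)"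
    using Suc.IH[of R0] by (simp add: R0_def)
  also have "\<dots> = (\<Sum>c<R0. inf_mat_pow A k a c * (g x * P c x))"
    by (simp add: sum_distrib_left algebra_simps)
  also have "\<dots> = (\<Sum>c<R0. inf_mat_pow A k a c * (\<Sum>d<R. A c d * P d x))"
    using R0R by (intro sum.cong refl) (simp add: rec)
  also have "\<dots> = (\<Sum>d<R. (\<Sum>c<R0. inf_mat_pow A k a c * A c d) * P d x)"
    by (simp add: sum_distrib_left sum_distrib_right mult.assoc sum.swap[of _ "{..<R}"])
  also have "\<dots> = (\<Sum>d<R. inf_mat_pow A (Suc k) a d * P d x)"
    using inf_mat_mult_banded_eq_sum[OF banded_inf_mat_pow[OF A, of k], of a R0]
    by (simp add: R0_def del: lessThan_Suc)
  finally show ?case .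
qed

lemma poly_recurrence:
  assumes J: "banded W J" and rec: "\<And>a R. a + W \<le> R \<Longrightarrow> x * P a x = (\<Sum>c<R. J a c * P c x)"
    and R: "a + (degree F * W + 1) \<le> R"
  shows "poly F x * P a x = (\<Sum>c<R. poly_inf_mat F J a c * P c x)"
proof -
  have pow: "x ^ k * P a x = (\<Sum>c<R. inf_mat_pow J k a c * P c x)" if "k \<le> degree F" for k
  proof -
    have "k * W \<le> degree F * W" using that by simp
    then have "a + k * W + 1 \<le> R" using R by linarith
    then show ?thesis
      using recurrence_power[where g = "\<lambda>y. y" and P = P, OF J rec, of a k R] by simp
  qed
  have "poly F x * P a x = (\<Sum>k\<le>degree F. coeff F k * (x ^ k * P a x))"
    by (simp add: poly_altdef sum_distrib_right mult.assoc)
  also have "\<dots> = (\<Sum>k\<le>degree F. \<Sum>c<R. coeff F k * inf_mat_pow J k a c * P c x)"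
    by (simp add: pow sum_distrib_left mult.assoc)
  also have "\<dots> = (\<Sum>c<R. poly_inf_mat F J a c * P c x)"
    by (simp add: poly_inf_mat_def sum_distrib_right sum.swap[of _ "{..<R}"])
  finally show ?thesis .
qed

section \<open>Square matrices over \<open>{..<N}\<close> as functions\<close>

definition fmat_mult :: "nat \<Rightarrow> (nat \<Rightarrow> nat \<Rightarrow> 'a::comm_ring_1) \<Rightarrow> (nat \<Rightarrow> nat \<Rightarrow> 'a) \<Rightarrow> nat \<Rightarrow> nat \<Rightarrow> 'a"
  where "fmat_mult N X Y i j = (\<Sum>k<N. X i k * Y k j)"

definition fmat_one :: "nat \<Rightarrow> nat \<Rightarrow> 'a::comm_ring_1"
  where "fmat_one i j = (if i = j then 1 else 0)"

fun fmat_pow :: "nat \<Rightarrow> (nat \<Rightarrow> nat \<Rightarrow> 'a::comm_ring_1) \<Rightarrow> nat \<Rightarrow> nat \<Rightarrow> nat \<Rightarrow> 'a" where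
  "fmat_pow N X 0 = fmat_one"
| "fmat_pow N X (Suc l) = fmat_mult N (fmat_pow N X l) X"

definition fmat_trace :: "nat \<Rightarrow> (nat \<Rightarrow> nat \<Rightarrow> 'a::comm_ring_1) \<Rightarrow> 'a"
  where "fmat_trace N X = (\<Sum>i<N. X i i)"

definition fmat_deriv :: "(nat \<Rightarrow> nat \<Rightarrow> 'a::comm_ring_1 fps) \<Rightarrow> nat \<Rightarrow> nat \<Rightarrow> 'a fps"
  where "fmat_deriv X i j = fps_deriv (X i j)"

lemma fps_nth_fmat_one: "fps_nth (fmat_one i j) n = (if n = 0 then fmat_one i j else 0)"
  unfolding fmat_one_def by simp

lemma fmat_mult_assoc: "fmat_mult N (fmat_mult N X Y) Z = fmat_mult N X (fmat_mult N Y Z)"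
  unfolding fmat_mult_def
  by (intro ext) (simp only: sum_distrib_left sum_distrib_right mult.assoc, rule sum.swap)

lemma fmat_mult_one_left: "i < N \<Longrightarrow> fmat_mult N fmat_one X i j = X i j"
proof -
  have "fmat_mult N fmat_one X i j = (\<Sum>k<N. if k = i then X k j else 0)"
    unfolding fmat_mult_def fmat_one_def by (intro sum.cong) auto
  then show "i < N \<Longrightarrow> ?thesis" by simp
qed

lemma fmat_mult_one_right: "j < N \<Longrightarrow> fmat_mult N X fmat_one i j = X i j"
proof -
  have "fmat_mult N X fmat_one i j = (\<Sum>k<N. if k = j then X i k else 0)"
    unfolding fmat_mult_def fmat_one_def by (intro sum.cong) auto
  then show "j < N \<Longrightarrow> ?thesis" by simp
qed

lemma fmat_mult_cong_left:
  "(\<And>i j. i < N \<Longrightarrow> j < N \<Longrightarrow> X i j = X' i j) \<Longrightarrow> i < N \<Longrightarrow> fmat_mult N X Y i j = fmat_mult N X' Y i j"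
  unfolding fmat_mult_def by (intro sum.cong) auto

lemma fmat_mult_cong_right:
  "(\<And>i j. i < N \<Longrightarrow> j < N \<Longrightarrow> Y i j = Y' i j) \<Longrightarrow> j < N \<Longrightarrow> fmat_mult N X Y i j = fmat_mult N X Y' i j"
  unfolding fmat_mult_def by (intro sum.cong) auto

lemma fmat_mult_add_left: "fmat_mult N (\<lambda>i j. X i j + X' i j) Y = (\<lambda>i j. fmat_mult N X Y i j + fmat_mult N X' Y i j)"
  unfolding fmat_mult_def by (intro ext) (simp add: distrib_right sum.distrib)

lemma fmat_mult_add_right: "fmat_mult N X (\<lambda>i j. Y i j + Y' i j) = (\<lambda>i j. fmat_mult N X Y i j + fmat_mult N X Y' i j)"
  unfolding fmat_mult_def by (intro ext) (simp add: distrib_left sum.distrib)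

lemma fmat_mult_scale_right: "fmat_mult N X (\<lambda>i j. c * Y i j) = (\<lambda>i j. c * fmat_mult N X Y i j)"
  unfolding fmat_mult_def by (intro ext) (simp add: sum_distrib_left algebra_simps)

lemma fmat_trace_mult_commute: "fmat_trace N (fmat_mult N X Y) = fmat_trace N (fmat_mult N Y X)"
  unfolding fmat_trace_def fmat_mult_def by (subst sum.swap) (simp add: mult.commute)

lemma fmat_trace_add: "fmat_trace N (\<lambda>i j. X i j + Y i j) = fmat_trace N X + fmat_trace N Y"
  unfolding fmat_trace_def by (simp add: sum.distrib)

lemma fmat_trace_scale: "fmat_trace N (\<lambda>i j. c * X i j) = c * fmat_trace N X"
  unfolding fmat_trace_def by (simp add: sum_distrib_left)

lemma fmat_trace_cong: "(\<And>i. i < N \<Longrightarrow> X i i = Y i i) \<Longrightarrow> fmat_trace N X = fmat_trace N Y"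
  unfolding fmat_trace_def by (intro sum.cong) auto

lemma fmat_pow_add:
  "i < N \<Longrightarrow> j < N \<Longrightarrow> fmat_mult N (fmat_pow N X l) (fmat_pow N X r) i j = fmat_pow N X (l + r) i j"
proof (induction r arbitrary: i j)
  case 0 then show ?case by (simp add: fmat_mult_one_right)
next
  case (Suc r)
  have "fmat_mult N (fmat_pow N X l) (fmat_pow N X (Suc r)) i j
      = fmat_mult N (fmat_mult N (fmat_pow N X l) (fmat_pow N X r)) X i j"
    by (simp only: fmat_pow.simps fmat_mult_assoc)
  also have "\<dots> = fmat_mult N (fmat_pow N X (l + r)) X i j"
    by (rule fmat_mult_cong_left) (use Suc in auto)
  finally show ?case by simp
qed

lemma fmat_pow_Suc_left:
  assumes "i < N" "j < N"
  shows "fmat_pow N X (Suc l) i j = fmat_mult N X (fmat_pow N X l) i j"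
proof -
  have "fmat_pow N X (1 + l) i j = fmat_mult N (fmat_pow N X 1) (fmat_pow N X l) i j"
    using fmat_pow_add[OF assms, of X 1 l] by simp
  also have "\<dots> = fmat_mult N X (fmat_pow N X l) i j"
    by (rule fmat_mult_cong_left) (use assms in \<open>auto simp: fmat_mult_one_left\<close>)
  finally show ?thesis by simp
qed

lemma fmat_deriv_mult: "fmat_deriv (fmat_mult N X Y) = (\<lambda>i j. fmat_mult N (fmat_deriv X) Y i j + fmat_mult N X (fmat_deriv Y) i j)"
  unfolding fmat_deriv_def fmat_mult_def by (intro ext) (simp add: fps_deriv_sum sum.distrib[symmetric] algebra_simps)

lemma fps_deriv_fmat_trace: "fps_deriv (fmat_trace N X) = fmat_trace N (fmat_deriv X)"
  unfolding fmat_trace_def fmat_deriv_def by (simp add: fps_deriv_sum)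

lemma fmat_trace_deriv_pow_mult_pow:
  "fmat_trace N (fmat_mult N (fmat_deriv (fmat_pow N A l)) (fmat_pow N A r))
     = of_nat l * fmat_trace N (fmat_mult N (fmat_deriv A) (fmat_pow N A (l + r - 1)))"
proof (induction l arbitrary: r)
  case 0
  then show ?case unfolding fmat_trace_def fmat_mult_def by (simp add: fmat_deriv_def fmat_one_def if_distrib[of fps_deriv] cong: if_cong)
next
  case (Suc l)
  let ?X = "fmat_mult N (fmat_mult N (fmat_deriv (fmat_pow N A l)) A) (fmat_pow N A r)"
  let ?Y = "fmat_mult N (fmat_mult N (fmat_pow N A l) (fmat_deriv A)) (fmat_pow N A r)"
  have "fmat_trace N (fmat_mult N (fmat_deriv (fmat_pow N A (Suc l))) (fmat_pow N A r)) = fmat_trace N ?X + fmat_trace N ?Y"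
    by (simp only: fmat_pow.simps fmat_deriv_mult fmat_mult_add_left fmat_trace_add)
  also have "fmat_trace N ?X = fmat_trace N (fmat_mult N (fmat_deriv (fmat_pow N A l)) (fmat_pow N A (Suc r)))"
    unfolding fmat_mult_assoc by (intro fmat_trace_cong fmat_mult_cong_right) (simp only: fmat_pow_Suc_left)
  also have "\<dots> = of_nat l * fmat_trace N (fmat_mult N (fmat_deriv A) (fmat_pow N A (l + r)))"
    using Suc.IH[of "Suc r"] by simp
  also have "fmat_trace N ?Y = fmat_trace N (fmat_mult N (fmat_deriv A) (fmat_mult N (fmat_pow N A r) (fmat_pow N A l)))"
    unfolding fmat_mult_assoc by (subst fmat_trace_mult_commute) (simp only: fmat_mult_assoc)
  also have "\<dots> = fmat_trace N (fmat_mult N (fmat_deriv A) (fmat_pow N A (l + r)))"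
    by (intro fmat_trace_cong fmat_mult_cong_right) (simp only: fmat_pow_add add.commute)
  finally show ?case by (simp add: algebra_simps)
qed

lemma fps_deriv_fmat_trace_pow:
  "fps_deriv (fmat_trace N (fmat_pow N A (Suc l))) = of_nat (Suc l) * fmat_trace N (fmat_mult N (fmat_deriv A) (fmat_pow N A l))"
proof -
  have "fps_deriv (fmat_trace N (fmat_pow N A (Suc l)))
      = fmat_trace N (fmat_mult N (fmat_deriv (fmat_pow N A (Suc l))) (fmat_pow N A 0))"
    unfolding fps_deriv_fmat_trace by (intro fmat_trace_cong) (simp add: fmat_mult_one_right)
  then show ?thesis by (simp only: fmat_trace_deriv_pow_mult_pow) simp
qed

definition fmat_det :: "nat \<Rightarrow> (nat \<Rightarrow> nat \<Rightarrow> 'a::comm_ring_1) \<Rightarrow> 'a"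
  where "fmat_det N E = det (mat N N (\<lambda>(i, j). E i j))"

definition fmat_adj :: "nat \<Rightarrow> (nat \<Rightarrow> nat \<Rightarrow> 'a::comm_ring_1) \<Rightarrow> nat \<Rightarrow> nat \<Rightarrow> 'a"
  where "fmat_adj N E i j = cofactor (mat N N (\<lambda>(i, j). E i j)) j i"

lemma fmat_det_eq_sum_permutations:
  "fmat_det N E = (\<Sum>p | p permutes {..<N}. signof p * (\<Prod>i<N. E i (p i)))"
proof -
  have "fmat_det N E = (\<Sum>p | p permutes {0..<N}. signof p * (\<Prod>i=0..<N. mat N N (\<lambda>(i, j). E i j) $$ (i, p i)))"
    unfolding fmat_det_def by (rule det_def') simp
  also have "\<dots> = (\<Sum>p | p permutes {..<N}. signof p * (\<Prod>i<N. E i (p i)))"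
    by (intro sum.cong arg_cong2[where f = "(*)"] prod.cong)
      (auto simp: atLeast0LessThan dest: permutes_in_image)
  finally show ?thesis .
qed

lemma fmat_det_cong: "(\<And>i j. i < N \<Longrightarrow> j < N \<Longrightarrow> E i j = E' i j) \<Longrightarrow> fmat_det N E = fmat_det N E'"
  unfolding fmat_det_def by (intro arg_cong[where f = det] eq_matI) auto

lemma fmat_det_transpose: "fmat_det N (\<lambda>i j. E j i) = fmat_det N E"
proof -
  have "transpose_mat (mat N N (\<lambda>(i, j). E i j)) = mat N N (\<lambda>(i, j). E j i)"
    by (rule eq_matI) auto
  then show ?thesis unfolding fmat_det_def by (metis det_transpose mat_carrier)
qed

lemma fmat_det_one: "fmat_det N fmat_one = 1"
proof -
  have "mat N N (\<lambda>(i, j). fmat_one i j :: 'a) = 1\<^sub>m N"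
    by (rule eq_matI) (auto simp: fmat_one_def)
  then show ?thesis unfolding fmat_det_def by simp
qed

lemma sum_permutations_pairs_eq_fact_det:
  "(\<Sum>\<sigma> | \<sigma> permutes {..<N}. \<Sum>\<tau> | \<tau> permutes {..<N}. signof \<sigma> * signof \<tau> * (\<Prod>i<N. E (\<sigma> i) (\<tau> i)))
     = of_nat (fact N) * fmat_det N E"
proof -
  let ?P = "{p. p permutes {..<N}}"
  have inner: "(\<Sum>\<tau>\<in>?P. signof \<sigma> * signof \<tau> * (\<Prod>i<N. E (\<sigma> i) (\<tau> i))) = fmat_det N E"
    if \<sigma>: "\<sigma> permutes {..<N}" for \<sigma>
  proof -
    have "(\<Sum>\<tau>\<in>?P. signof \<sigma> * signof \<tau> * (\<Prod>i<N. E (\<sigma> i) (\<tau> i)))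
        = (\<Sum>\<tau>\<in>?P. signof \<sigma> * signof (\<tau> \<circ> \<sigma>) * (\<Prod>i<N. E (\<sigma> i) ((\<tau> \<circ> \<sigma>) i)))"
      by (rule sum_permutations_compose_right[OF \<sigma>])
    also have "\<dots> = (\<Sum>\<tau>\<in>?P. signof \<tau> * (\<Prod>i<N. E i (\<tau> i)))"
    proof (intro sum.cong refl)
      fix \<tau> assume "\<tau> \<in> ?P"
      then have "permutation \<tau>" "permutation \<sigma>"
        using \<sigma> by (auto simp: permutation_permutes)
      then have "signof (\<tau> \<circ> \<sigma>) = (signof \<tau> * signof \<sigma> :: 'a)"
        by (simp add: sign_compose)
      moreover have "(\<Prod>i<N. E (\<sigma> i) ((\<tau> \<circ> \<sigma>) i)) = (\<Prod>i<N. E i (\<tau> i))"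
        using prod.reindex_bij_betw[OF permutes_imp_bij[OF \<sigma>], of "\<lambda>j. E j (\<tau> j)"] by simp
      moreover have "signof \<sigma> * signof \<sigma> = (1::'a)"
        by (simp flip: of_int_mult)
      ultimately show "signof \<sigma> * signof (\<tau> \<circ> \<sigma>) * (\<Prod>i<N. E (\<sigma> i) ((\<tau> \<circ> \<sigma>) i))
          = signof \<tau> * (\<Prod>i<N. E i (\<tau> i))"
        by (metis (no_types, lifting) mult.assoc mult.commute mult.left_neutral)
    qed
    finally show ?thesis by (simp add: fmat_det_eq_sum_permutations)
  qed
  have "card ?P = fact N" by (rule card_permutations) auto
  then show ?thesis by (simp add: inner)
qed

lemma fps_deriv_prod:
  fixes f :: "'i \<Rightarrow> 'a::comm_ring_1 fps"
  assumes "finite I"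
  shows "fps_deriv (\<Prod>i\<in>I. f i) = (\<Sum>i\<in>I. fps_deriv (f i) * (\<Prod>j\<in>I - {i}. f j))"
  using assms
proof (induction I rule: finite_induct)
  case empty then show ?case by simp
next
  case (insert a I)
  have "(\<Prod>j\<in>insert a I - {i}. f j) = f a * (\<Prod>j\<in>I - {i}. f j)" if "i \<in> I" for i
  proof -
    have "insert a I - {i} = insert a (I - {i})" using that insert by auto
    then show ?thesis using insert by simp
  qed
  moreover have "insert a I - {a} = I" using insert by auto
  ultimately show ?case using insert
    by (simp add: sum_distrib_left algebra_simps cong: sum.cong)
qed

lemma fps_deriv_fmat_det:
  fixes E :: "nat \<Rightarrow> nat \<Rightarrow> 'a::comm_ring_1 fps"
  shows "fps_deriv (fmat_det N E) = fmat_trace N (fmat_mult N (fmat_deriv E) (fmat_adj N E))"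
proof -
  let ?P = "{p. p permutes {..<N}}"
  define E' where "E' i = (\<lambda>a b. if a = i then fmat_deriv E a b else E a b)" for i
  have row: "(\<Sum>p\<in>?P. signof p * (fmat_deriv E i (p i) * (\<Prod>a\<in>{..<N} - {i}. E a (p a)))) = fmat_det N (E' i)"
    if i: "i < N" for i
    unfolding fmat_det_eq_sum_permutations
  proof (intro sum.cong refl arg_cong2[where f = "(*)"])
    fix p
    have "(\<Prod>a<N. E' i a (p a)) = E' i i (p i) * (\<Prod>a\<in>{..<N} - {i}. E' i a (p a))"
      using i by (intro prod.remove) auto
    then show "fmat_deriv E i (p i) * (\<Prod>a\<in>{..<N} - {i}. E a (p a)) = (\<Prod>a<N. E' i a (p a))"
      by (simp add: E'_def)
  qed
  have expand: "fmat_det N (E' i) = (\<Sum>j<N. fmat_deriv E i j * fmat_adj N E j i)" if i: "i < N" for i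
  proof -
    have "mat_delete (mat N N (\<lambda>(a, b). E' i a b)) i j = mat_delete (mat N N (\<lambda>(a, b). E a b)) i j" for j
      by (rule eq_matI) (auto simp: mat_delete_def E'_def)
    then show ?thesis
      unfolding fmat_det_def fmat_adj_def using i
      by (subst laplace_expansion_row[where i = i]) (auto simp: cofactor_def E'_def intro!: sum.cong)
  qed
  have "fps_deriv (fmat_det N E) = (\<Sum>p\<in>?P. \<Sum>i<N. signof p * (fmat_deriv E i (p i) * (\<Prod>a\<in>{..<N} - {i}. E a (p a))))"
    unfolding fmat_det_eq_sum_permutations
    by (simp add: fps_deriv_sum fps_deriv_prod sum_distrib_left fmat_deriv_def)
  also have "\<dots> = (\<Sum>i<N. fmat_det N (E' i))"
    by (subst sum.swap) (simp add: row)
  also have "\<dots> = fmat_trace N (fmat_mult N (fmat_deriv E) (fmat_adj N E))"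
    unfolding fmat_trace_def fmat_mult_def by (simp add: expand)
  finally show ?thesis .
qed

lemma fmat_adj_mult:
  assumes "i < N" "j < N"
  shows "fmat_mult N (fmat_adj N E) E i j = (if i = j then fmat_det N E else 0)"
proof -
  let ?A = "mat N N (\<lambda>(i, j). E i j)"
  have A: "?A \<in> carrier_mat N N" by simp
  have "fmat_mult N (fmat_adj N E) E i j = (adj_mat ?A * ?A) $$ (i, j)"
    using assms adj_mat(1)[OF A]
    by (auto simp: scalar_prod_def adj_mat_def fmat_adj_def fmat_mult_def atLeast0LessThan intro!: sum.cong)
  also have "\<dots> = (fmat_det N E \<cdot>\<^sub>m 1\<^sub>m N) $$ (i, j)"
    using adj_mat(3)[OF A] by (simp add: fmat_det_def)
  finally show ?thesis using assms by simp
qed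

interpretation fps_nth_0: comm_ring_hom "\<lambda>f::'a::comm_ring_1 fps. fps_nth f 0"
  by unfold_locales (auto simp: fps_mult_nth)

lemma fps_nth_fmat_det_0: "fps_nth (fmat_det N E) 0 = fmat_det N (\<lambda>i j. fps_nth (E i j) 0)"
proof -
  have "map_mat (\<lambda>f. fps_nth f 0) (mat N N (\<lambda>(i, j). E i j)) = mat N N (\<lambda>(i, j). fps_nth (E i j) 0)"
    by (rule eq_matI) auto
  then show ?thesis
    unfolding fmat_det_def by (metis fps_nth_0.hom_det)
qed

section \<open>The logarithm of a determinant\<close>

definition fmat_subdegree_ge :: "nat \<Rightarrow> nat \<Rightarrow> (nat \<Rightarrow> nat \<Rightarrow> 'a::comm_ring_1 fps) \<Rightarrow> bool"
  where "fmat_subdegree_ge N K X \<longleftrightarrow> (\<forall>i<N. \<forall>j<N. \<forall>m<K. fps_nth (X i j) m = 0)"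

lemma fps_nth_mult_eq_0:
  fixes f g :: "'a::comm_ring_1 fps"
  assumes "\<And>m. m < a \<Longrightarrow> fps_nth f m = 0" "\<And>m. m < b \<Longrightarrow> fps_nth g m = 0" "m < a + b"
  shows "fps_nth (f * g) m = 0"
  unfolding fps_mult_nth
proof (rule sum.neutral, intro ballI)
  fix i assume "i \<in> {0..m}"
  then show "fps_nth f i * fps_nth g (m - i) = 0"
    using assms by (cases "i < a") auto
qed

lemma fmat_subdegree_ge_mult:
  assumes X: "fmat_subdegree_ge N a X" and Y: "fmat_subdegree_ge N b Y"
  shows "fmat_subdegree_ge N (a + b) (fmat_mult N X Y)"
  unfolding fmat_subdegree_ge_def fmat_mult_def fps_sum_nth
  by (intro allI impI sum.neutral ballI fps_nth_mult_eq_0[of a _ b])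
    (use X Y in \<open>auto simp: fmat_subdegree_ge_def\<close>)

lemma fmat_subdegree_ge_0: "fmat_subdegree_ge N 0 X"
  unfolding fmat_subdegree_ge_def by simp

lemma fmat_subdegree_ge_pow: "fmat_subdegree_ge N 1 A \<Longrightarrow> fmat_subdegree_ge N l (fmat_pow N A l)"
  by (induction l) (auto simp: fmat_subdegree_ge_0 dest: fmat_subdegree_ge_mult)

lemma fps_nth_fmat_trace_eq_0: "fmat_subdegree_ge N K X \<Longrightarrow> m < K \<Longrightarrow> fps_nth (fmat_trace N X) m = 0"
  unfolding fmat_subdegree_ge_def fmat_trace_def by (simp add: fps_sum_nth)

lemma fps_nth_fmat_det_one_plus_0:
  fixes A :: "nat \<Rightarrow> nat \<Rightarrow> 'a::comm_ring_1 fps"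
  assumes "fmat_subdegree_ge N 1 A"
  shows "fps_nth (fmat_det N (\<lambda>i j. fmat_one i j + A i j)) 0 = 1"
proof -
  have "fmat_det N (\<lambda>i j. fps_nth (fmat_one i j + A i j) 0) = fmat_det N fmat_one"
    using assms by (intro fmat_det_cong) (simp add: fmat_subdegree_ge_def fps_nth_fmat_one)
  then show ?thesis
    unfolding fps_nth_fmat_det_0 by (simp add: fmat_det_one)
qed

lemma fps_nth_eq_0_if_mult_nth_eq_0:
  fixes B D :: "'a::comm_ring_1 fps"
  assumes B0: "fps_nth B 0 = 1" and DB: "\<And>m. m < K \<Longrightarrow> fps_nth (D * B) m = 0"
  shows "m < K \<Longrightarrow> fps_nth D m = 0"
proof (induction m rule: less_induct)
  case (less m)
  have "fps_nth (D * B) m = (\<Sum>i<m. fps_nth D i * fps_nth B (m - i)) + fps_nth D m * fps_nth B 0"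
    by (simp add: fps_mult_nth atLeast0AtMost lessThan_Suc_atMost[symmetric])
  also have "(\<Sum>i<m. fps_nth D i * fps_nth B (m - i)) = 0"
    using less by (intro sum.neutral) auto
  finally show ?case using DB[OF less.prems] B0 by simp
qed

lemma fps_deriv_fps_ln_compose:
  fixes B :: "'a::field_char_0 fps"
  assumes B0: "fps_nth B 0 = 1"
  shows "fps_deriv (fps_ln 1 oo (B - 1)) * B = fps_deriv B"
proof -
  have Bm0: "fps_nth (B - 1) 0 = 0" using B0 by simp
  have "fps_deriv (fps_ln 1 oo (B - 1)) = (inverse (1 + fps_X) oo (B - 1)) * fps_deriv B"
    by (simp add: fps_compose_deriv[OF Bm0] fps_ln_deriv)
  also have "inverse (1 + fps_X) oo (B - 1) = inverse ((1 + fps_X) oo (B - 1))"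
    by (rule fps_inverse_compose[OF Bm0]) simp
  also have "(1 + fps_X) oo (B - 1) = B"
    using Bm0 by (simp add: fps_compose_add_distrib)
  finally show ?thesis using inverse_mult_eq_1[of B] B0 by (simp add: algebra_simps)
qed

text \<open>With \<open>E = 1 + A\<close>, the adjugate identity \<open>adj E \<cdot> E = det E \<cdot> 1\<close> turns
  \<open>det E \<cdot> tr (A' A\<^sup>l)\<close> into a sum of two consecutive terms of
  \<open>t l = tr (A' adj E A\<^sup>l)\<close>; summed with alternating signs, these telescope.\<close>

lemma fmat_det_mult_trace_deriv_pow:
  fixes A :: "nat \<Rightarrow> nat \<Rightarrow> 'a::comm_ring_1 fps"
  defines "E \<equiv> \<lambda>i j. fmat_one i j + A i j"
  shows "fmat_det N E * fmat_trace N (fmat_mult N (fmat_deriv A) (fmat_pow N A l))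
    = fmat_trace N (fmat_mult N (fmat_deriv A) (fmat_mult N (fmat_adj N E) (fmat_pow N A l)))
    + fmat_trace N (fmat_mult N (fmat_deriv A) (fmat_mult N (fmat_adj N E) (fmat_pow N A (Suc l))))"
proof -
  let ?B = "fmat_det N E" and ?C = "fmat_adj N E"
  have "?B * fmat_pow N A l i j = fmat_mult N ?C (fmat_pow N A l) i j + fmat_mult N ?C (fmat_pow N A (Suc l)) i j"
    if ij: "i < N" "j < N" for i j
  proof -
    have "fmat_mult N (fmat_mult N ?C E) (fmat_pow N A l) i j = (\<Sum>k<N. if k = i then ?B * fmat_pow N A l k j else 0)"
      unfolding fmat_mult_def[of N "fmat_mult N ?C E"] using ij fmat_adj_mult[of i N _ E]
      by (intro sum.cong) auto
    then have "?B * fmat_pow N A l i j = fmat_mult N ?C (fmat_mult N E (fmat_pow N A l)) i j"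
      using ij by (simp add: fmat_mult_assoc)
    also have "\<dots> = fmat_mult N ?C (\<lambda>i j. fmat_pow N A l i j + fmat_pow N A (Suc l) i j) i j"
      by (intro fmat_mult_cong_right)
        (simp_all add: ij E_def fmat_mult_add_left fmat_mult_one_left fmat_pow_Suc_left del: fmat_pow.simps(2))
    finally show ?thesis by (simp add: fmat_mult_add_right)
  qed
  then have "fmat_trace N (fmat_mult N (fmat_deriv A) (\<lambda>i j. ?B * fmat_pow N A l i j))
      = fmat_trace N (fmat_mult N (fmat_deriv A) (\<lambda>i j. fmat_mult N ?C (fmat_pow N A l) i j + fmat_mult N ?C (fmat_pow N A (Suc l)) i j))"
    by (intro fmat_trace_cong fmat_mult_cong_right) auto
  then show ?thesis
    by (simp add: fmat_mult_scale_right fmat_trace_scale fmat_mult_add_right fmat_trace_add)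
qed

lemma fmat_det_mult_deriv_log_series:
  fixes A :: "nat \<Rightarrow> nat \<Rightarrow> 'a::comm_ring_1 fps"
  defines "E \<equiv> \<lambda>i j. fmat_one i j + A i j"
  shows "fmat_det N E * (\<Sum>l<K. (-1) ^ l * fmat_trace N (fmat_mult N (fmat_deriv A) (fmat_pow N A l)))
    = fps_deriv (fmat_det N E) - (-1) ^ K * fmat_trace N (fmat_mult N (fmat_deriv A) (fmat_mult N (fmat_adj N E) (fmat_pow N A K)))"
proof (induction K)
  case 0
  have "fmat_deriv E = fmat_deriv A"
    unfolding E_def fmat_deriv_def fmat_one_def by (intro ext) simp
  then have "fps_deriv (fmat_det N E) = fmat_trace N (fmat_mult N (fmat_deriv A) (fmat_adj N E))"
    by (simp add: fps_deriv_fmat_det)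
  also have "\<dots> = fmat_trace N (fmat_mult N (fmat_deriv A) (fmat_mult N (fmat_adj N E) (fmat_pow N A 0)))"
    by (intro fmat_trace_cong fmat_mult_cong_right) (simp add: fmat_mult_one_right)
  finally show ?case by simp
next
  case (Suc K)
  let ?T = "\<lambda>l. fmat_trace N (fmat_mult N (fmat_deriv A) (fmat_pow N A l))"
  let ?t = "\<lambda>l. fmat_trace N (fmat_mult N (fmat_deriv A) (fmat_mult N (fmat_adj N E) (fmat_pow N A l)))"
  have step: "fmat_det N E * ?T K = ?t K + ?t (Suc K)"
    unfolding E_def by (rule fmat_det_mult_trace_deriv_pow)
  have "fmat_det N E * (\<Sum>l<Suc K. (-1) ^ l * ?T l) = fmat_det N E * (\<Sum>l<K. (-1) ^ l * ?T l) + (-1) ^ K * (fmat_det N E * ?T K)"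
    by (simp add: algebra_simps)
  also have "\<dots> = fps_deriv (fmat_det N E) - (-1) ^ K * ?t K + (-1) ^ K * (?t K + ?t (Suc K))"
    by (simp only: Suc.IH step)
  also have "\<dots> = fps_deriv (fmat_det N E) - (-1) ^ Suc K * ?t (Suc K)"
    by (simp only: power_Suc) (simp add: algebra_simps del: fmat_pow.simps)
  finally show ?case .
qed

lemma fps_deriv_log_trace_series:
  fixes A :: "nat \<Rightarrow> nat \<Rightarrow> real fps"
  shows "fps_deriv (\<Sum>l\<in>{1..K}. fps_const ((-1) ^ (l + 1) / real l) * fmat_trace N (fmat_pow N A l))
    = (\<Sum>l<K. (-1) ^ l * fmat_trace N (fmat_mult N (fmat_deriv A) (fmat_pow N A l)))"
proof -
  have "fps_deriv (\<Sum>l\<in>{1..K}. fps_const ((-1) ^ (l + 1) / real l) * fmat_trace N (fmat_pow N A l))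
      = (\<Sum>l\<in>{1..K}. fps_const ((-1) ^ (l + 1) / real l) * fps_deriv (fmat_trace N (fmat_pow N A l)))"
    by (simp add: fps_deriv_sum)
  also have "\<dots> = (\<Sum>l<K. fps_const ((-1) ^ (Suc l + 1) / real (Suc l)) * fps_deriv (fmat_trace N (fmat_pow N A (Suc l))))"
    using sum.atLeast1_atMost_eq[of "\<lambda>l. fps_const ((-1) ^ (l + 1) / real l) * fps_deriv (fmat_trace N (fmat_pow N A l))" K]
    by (simp del: fmat_pow.simps)
  also have "\<dots> = (\<Sum>l<K. (-1) ^ l * fmat_trace N (fmat_mult N (fmat_deriv A) (fmat_pow N A l)))"
  proof (intro sum.cong refl)
    fix l
    have "(of_nat (Suc l) :: real fps) = fps_const (real (Suc l))"
      by (simp only: fps_of_nat)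
    then have "fps_const ((-1) ^ (Suc l + 1) / real (Suc l)) * (of_nat (Suc l) :: real fps) = fps_const ((-1) ^ l)"
      by (simp del: of_nat_Suc)
    moreover have "fps_const ((-1) ^ l) = ((-1) ^ l :: real fps)"
      by (metis fps_const_neg fps_const_1_eq_1 fps_const_power)
    ultimately have "fps_const ((-1) ^ (Suc l + 1) / real (Suc l)) * (of_nat (Suc l) :: real fps) = (-1) ^ l"
      by simp
    then show "fps_const ((-1) ^ (Suc l + 1) / real (Suc l)) * fps_deriv (fmat_trace N (fmat_pow N A (Suc l)))
        = (-1) ^ l * fmat_trace N (fmat_mult N (fmat_deriv A) (fmat_pow N A l))"
      by (simp only: fps_deriv_fmat_trace_pow mult.assoc[symmetric])
  qed
  finally show ?thesis .
qed

theorem fps_ln_fmat_det_one_plus: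
  fixes A :: "nat \<Rightarrow> nat \<Rightarrow> real fps"
  assumes A: "fmat_subdegree_ge N 1 A"
  shows "fps_nth (fps_ln 1 oo (fmat_det N (\<lambda>i j. fmat_one i j + A i j) - 1)) n
       = (\<Sum>l\<in>{1..n}. (-1) ^ (l + 1) / real l * fps_nth (fmat_trace N (fmat_pow N A l)) n)"
proof -
  define E where "E = (\<lambda>i j. fmat_one i j + A i j)"
  define B where "B = fmat_det N E"
  define \<Lambda> where "\<Lambda> = fps_ln 1 oo (B - 1)"
  define L where "L = (\<lambda>K. \<Sum>l\<in>{1..K}. fps_const ((-1) ^ (l + 1) / real l) * fmat_trace N (fmat_pow N A l))"
  have B0: "fps_nth B 0 = 1"
    unfolding B_def E_def by (rule fps_nth_fmat_det_one_plus_0[OF A])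
  have dL: "fps_deriv (L K) = (\<Sum>l<K. (-1) ^ l * fmat_trace N (fmat_mult N (fmat_deriv A) (fmat_pow N A l)))" for K
    unfolding L_def by (rule fps_deriv_log_trace_series)
  text \<open>Below degree \<open>K\<close> the derivatives of the partial sum \<open>L K\<close> and of \<open>\<Lambda>\<close> agree,
    because their difference times \<open>B\<close> is a multiple of \<open>A\<^sup>K\<close>.\<close>
  have agree: "fps_nth (fps_deriv (L K)) m = fps_nth (fps_deriv \<Lambda>) m" if "m < K" for K m
  proof -
    let ?t = "fmat_trace N (fmat_mult N (fmat_deriv A) (fmat_mult N (fmat_adj N E) (fmat_pow N A K)))"
    have eq: "(fps_deriv (L K) - fps_deriv \<Lambda>) * B = - ((-1) ^ K * ?t)"
      using fmat_det_mult_deriv_log_series[of N A K] fps_deriv_fps_ln_compose[OF B0]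
      by (simp add: dL algebra_simps B_def E_def \<Lambda>_def)
    have "fmat_subdegree_ge N (0 + (0 + K)) (fmat_mult N (fmat_deriv A) (fmat_mult N (fmat_adj N E) (fmat_pow N A K)))"
      by (intro fmat_subdegree_ge_mult fmat_subdegree_ge_0 fmat_subdegree_ge_pow A)
    then have "fps_nth ?t m = 0" if "m < K" for m
      using that by (simp add: fps_nth_fmat_trace_eq_0)
    then have "fps_nth ((fps_deriv (L K) - fps_deriv \<Lambda>) * B) m = 0" if "m < K" for m
      unfolding eq using fps_nth_mult_eq_0[of 0 "(-1) ^ K" K ?t m] that by simp
    then show ?thesis using fps_nth_eq_0_if_mult_nth_eq_0[OF B0, of K "fps_deriv (L K) - fps_deriv \<Lambda>" m] that
      by simp
  qed
  have "fps_nth (L n) n = fps_nth \<Lambda> n"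
  proof (cases n)
    case (Suc m)
    then show ?thesis using agree[of m n] by (simp del: of_nat_Suc)
  next
    case 0
    then show ?thesis by (simp add: L_def \<Lambda>_def)
  qed
  then show ?thesis
    unfolding \<Lambda>_def B_def E_def L_def by (simp add: fps_sum_nth)
qed

section \<open>Compositions\<close>

definition compositions_of_length :: "nat \<Rightarrow> nat \<Rightarrow> nat list set" where
  "compositions_of_length l n = {ks. length ks = l \<and> (\<forall>k\<in>set ks. 0 < k) \<and> sum_list ks = n}"

lemma finite_compositions_of_length: "finite (compositions_of_length l n)"
proof (rule finite_subset)
  show "compositions_of_length l n \<subseteq> {ks. set ks \<subseteq> {..n} \<and> length ks = l}"
    unfolding compositions_of_length_def by (auto dest: member_le_sum_list)
  show "finite {ks. set ks \<subseteq> {..n} \<and> length ks = l}"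
    by (rule finite_lists_length_eq) simp
qed

lemma compositions_of_length_0: "compositions_of_length 0 n = (if n = 0 then {[]} else {})"
  unfolding compositions_of_length_def by auto

lemma compositions_of_length_Suc:
  "compositions_of_length (Suc l) n = (\<lambda>(k, ks). k # ks) ` (SIGMA k:{1..n}. compositions_of_length l (n - k))"
  unfolding compositions_of_length_def by (auto simp: length_Suc_conv image_iff)

lemma compositions_of_length_1: "1 \<le> n \<Longrightarrow> compositions_of_length (Suc 0) n = {[n]}"
  unfolding compositions_of_length_def by (auto simp: length_Suc_conv)

fun fmat_coeff_prod :: "nat \<Rightarrow> (nat \<Rightarrow> nat \<Rightarrow> 'a::comm_ring_1 fps) \<Rightarrow> nat list \<Rightarrow> nat \<Rightarrow> nat \<Rightarrow> 'a" where
  "fmat_coeff_prod N A [] = fmat_one"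
| "fmat_coeff_prod N A (k # ks) = fmat_mult N (\<lambda>i j. fps_nth (A i j) k) (fmat_coeff_prod N A ks)"

lemma fps_nth_fmat_pow:
  assumes A: "fmat_subdegree_ge N 1 A" and ij: "i < N" "j < N"
  shows "fps_nth (fmat_pow N A l i j) n = (\<Sum>ks\<in>compositions_of_length l n. fmat_coeff_prod N A ks i j)"
  using ij
proof (induction l arbitrary: n i j)
  case 0
  then show ?case by (simp add: fps_nth_fmat_one compositions_of_length_0)
next
  case (Suc l)
  have A0: "fps_nth (A i c) 0 = 0" if "c < N" for c
    using A Suc.prems that unfolding fmat_subdegree_ge_def by auto
  have "fps_nth (fmat_pow N A (Suc l) i j) n = (\<Sum>c<N. \<Sum>k=0..n. fps_nth (A i c) k * fps_nth (fmat_pow N A l c j) (n - k))"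
    using Suc.prems by (simp add: fmat_pow_Suc_left fmat_mult_def fps_sum_nth fps_mult_nth del: fmat_pow.simps)
  also have "\<dots> = (\<Sum>c<N. \<Sum>k\<in>{1..n}. \<Sum>ks\<in>compositions_of_length l (n - k). fps_nth (A i c) k * fmat_coeff_prod N A ks c j)"
  proof (rule sum.cong[OF refl])
    fix c assume c: "c \<in> {..<N}"
    have "{0..n} = insert 0 {1..n}" by auto
    then show "(\<Sum>k=0..n. fps_nth (A i c) k * fps_nth (fmat_pow N A l c j) (n - k))
        = (\<Sum>k\<in>{1..n}. \<Sum>ks\<in>compositions_of_length l (n - k). fps_nth (A i c) k * fmat_coeff_prod N A ks c j)"
      using A0 c Suc.IH Suc.prems by (simp add: sum_distrib_left)
  qed
  also have "\<dots> = (\<Sum>k\<in>{1..n}. \<Sum>ks\<in>compositions_of_length l (n - k). fmat_coeff_prod N A (k # ks) i j)"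
    by (subst sum.swap, rule sum.cong[OF refl], subst sum.swap) (simp add: fmat_mult_def)
  also have "\<dots> = (\<Sum>ks\<in>compositions_of_length (Suc l) n. fmat_coeff_prod N A ks i j)"
    unfolding compositions_of_length_Suc
    by (subst sum.reindex) (auto simp: inj_on_def sum.Sigma finite_compositions_of_length split_beta)
  finally show ?case .
qed

lemma fps_nth_fmat_trace_pow:
  assumes "fmat_subdegree_ge N 1 A"
  shows "fps_nth (fmat_trace N (fmat_pow N A l)) n = (\<Sum>ks\<in>compositions_of_length l n. fmat_trace N (fmat_coeff_prod N A ks))"
  unfolding fmat_trace_def using assms by (simp add: fps_sum_nth fps_nth_fmat_pow sum.swap[of _ "{..<N}"])

text \<open>The one-dimensional case \<open>A = e\<^sup>z - 1\<close> of the logarithm of a determinant: since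
  \<open>log (e\<^sup>z) = z\<close> has no coefficients beyond the first, the terms of length at least two
  cancel the term \<open>1/n!\<close> of length one.\<close>

lemma sum_compositions_inverse_fact:
  assumes n: "n \<ge> 2"
  shows "(\<Sum>l\<in>{2..n}. (-1) ^ (l + 1) / real l * (\<Sum>ks\<in>compositions_of_length l n. 1 / (\<Prod>k\<leftarrow>ks. fact k))) = - 1 / fact n"
proof -
  define A where "A = (\<lambda>(i::nat) (j::nat). fps_exp (1::real) - 1)"
  have A1: "fmat_subdegree_ge 1 1 A" unfolding fmat_subdegree_ge_def A_def by simp
  have coeff_prod: "fmat_coeff_prod (Suc 0) A ks 0 0 = 1 / (\<Prod>k\<leftarrow>ks. fact k)" if "\<forall>k\<in>set ks. 0 < k" for ks
    using that by (induction ks) (simp_all add: fmat_one_def fmat_mult_def A_def)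
  have "fmat_det 1 (\<lambda>i j. fmat_one i j + A i j) = fps_exp 1"
    unfolding fmat_det_def by (subst det_single) (simp_all add: fmat_one_def A_def)
  moreover have "fps_ln 1 oo (fps_exp 1 - 1) = (fps_X :: real fps)"
    by (simp add: fps_ln_fps_exp_inv fps_inv)
  ultimately have "(\<Sum>l\<in>{1..n}. (-1) ^ (l + 1) / real l * fps_nth (fmat_trace 1 (fmat_pow 1 A l)) n) = 0"
    using fps_ln_fmat_det_one_plus[OF A1, of n] n by simp
  moreover have "fps_nth (fmat_trace 1 (fmat_pow 1 A l)) n = (\<Sum>ks\<in>compositions_of_length l n. 1 / (\<Prod>k\<leftarrow>ks. fact k))" for l
    unfolding fps_nth_fmat_trace_pow[OF A1]
    by (intro sum.cong refl) (simp add: fmat_trace_def coeff_prod compositions_of_length_def)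
  moreover have "{1..n} = insert 1 {2..n}" using n by auto
  ultimately show ?thesis
    using n by (simp add: compositions_of_length_1 field_simps)
qed

text \<open>The tuples \<open>0 < n\<^sub>1 < \<dots> < n\<^sub>\<ell> < n\<close> in \<open>Lambda_set n\<close> are the inner partial sums
  of the compositions of \<open>n\<close> into at least two parts, and \<open>gaps n\<close> recovers the parts.\<close>

definition cut_lists :: "nat \<Rightarrow> nat list set"
  where "cut_lists n = {ns. sorted_wrt (<) ns \<and> set ns \<subseteq> {1..<n}}"

definition compositions :: "nat \<Rightarrow> nat list set"
  where "compositions n = {ks. ks \<noteq> [] \<and> (\<forall>k\<in>set ks. 0 < k) \<and> sum_list ks = n}"

fun inner_partial_sums :: "nat list \<Rightarrow> nat list" where
  "inner_partial_sums [] = []"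
| "inner_partial_sums [k] = []"
| "inner_partial_sums (k # k' # ks) = k # map (\<lambda>s. s + k) (inner_partial_sums (k' # ks))"

lemma Lambda_set_eq_cut_lists: "Lambda_set n = cut_lists n - {[]}"
  unfolding Lambda_set_def cut_lists_def by auto

lemma length_gaps [simp]: "length (gaps n ns) = length ns + 1"
  unfolding gaps_def by simp

lemma gaps_Nil: "gaps n [] = [n]"
  unfolding gaps_def by simp

lemma gaps_eq_map_zip: "gaps n ns = map (\<lambda>(a, b). a - b) (zip (ns @ [n]) (0 # ns))"
  unfolding gaps_def by (rule nth_equalityI) (auto simp: nth_append less_Suc_eq)

lemma gaps_Cons:
  assumes "\<forall>x\<in>set ns. n1 < x" "n1 \<le> n"
  shows "gaps n (n1 # ns) = n1 # gaps (n - n1) (map (\<lambda>x. x - n1) ns)"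
proof -
  have "zip (map (\<lambda>x. x - n1) ns @ [n - n1]) (0 # map (\<lambda>x. x - n1) ns)
      = map (\<lambda>(a, b). (a - n1, b - n1)) (zip (ns @ [n]) (n1 # ns))"
    by (simp add: zip_map_map[symmetric])
  moreover have "(a - n1) - (b - n1) = a - b" if "(a, b) \<in> set (zip (ns @ [n]) (n1 # ns))" for a b
  proof -
    have "n1 \<le> b" using set_zip_rightD[OF that] assms by auto
    then show ?thesis by simp
  qed
  ultimately show ?thesis
    unfolding gaps_eq_map_zip by auto
qed

lemma map_minus_in_cut_lists:
  assumes "n1 # ns \<in> cut_lists n"
  shows "map (\<lambda>x. x - n1) ns \<in> cut_lists (n - n1)"
proof -
  have gt: "\<forall>x\<in>set ns. n1 < x" and "sorted_wrt (<) ns" "set ns \<subseteq> {1..<n}"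
    using assms by (auto simp: cut_lists_def)
  then have "sorted_wrt (\<lambda>x y. x - n1 < y - n1) ns"
    by (elim sorted_wrt_mono_rel[rotated]) auto
  moreover have "x - n1 \<in> {1..<n - n1}" if "x \<in> set ns" for x
    using that gt \<open>set ns \<subseteq> {1..<n}\<close> by fastforce
  ultimately show ?thesis
    by (auto simp: cut_lists_def sorted_wrt_map)
qed

lemma gaps_in_compositions: "ns \<in> cut_lists n \<Longrightarrow> 1 \<le> n \<Longrightarrow> gaps n ns \<in> compositions n"
proof (induction "length ns" arbitrary: ns n rule: less_induct)
  case less
  show ?case
  proof (cases ns)
    case Nil
    then show ?thesis using less.prems by (simp add: gaps_Nil compositions_def)
  next
    case (Cons n1 ns')
    then have "\<forall>x\<in>set ns'. n1 < x" "1 \<le> n1" "n1 < n"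
      using less.prems by (auto simp: cut_lists_def)
    moreover have "gaps (n - n1) (map (\<lambda>x. x - n1) ns') \<in> compositions (n - n1)"
      using less.hyps[OF _ map_minus_in_cut_lists] less.prems Cons \<open>n1 < n\<close> by simp
    ultimately show ?thesis using Cons by (auto simp: gaps_Cons compositions_def)
  qed
qed

lemma inner_partial_sums_gaps: "ns \<in> cut_lists n \<Longrightarrow> inner_partial_sums (gaps n ns) = ns"
proof (induction "length ns" arbitrary: ns n rule: less_induct)
  case less
  show ?case
  proof (cases ns)
    case Nil
    then show ?thesis by (simp add: gaps_Nil)
  next
    case (Cons n1 ns')
    have gt: "\<forall>x\<in>set ns'. n1 < x" and le: "n1 \<le> n" using less.prems Cons by (auto simp: cut_lists_def)
    obtain k ks where g: "gaps (n - n1) (map (\<lambda>x. x - n1) ns') = k # ks"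
      by (metis length_gaps list.exhaust list.size(3) add_is_0 zero_neq_one)
    have "map (\<lambda>x. x - n1) ns' \<in> cut_lists (n - n1)"
      using less.prems Cons by (simp add: map_minus_in_cut_lists)
    then have "inner_partial_sums (gaps (n - n1) (map (\<lambda>x. x - n1) ns')) = map (\<lambda>x. x - n1) ns'"
      by (intro less.hyps) (simp_all add: Cons)
    then have "inner_partial_sums (k # ks) = map (\<lambda>x. x - n1) ns'"
      by (simp only: g)
    moreover have "map (\<lambda>s. s + n1) (map (\<lambda>x. x - n1) ns') = ns'"
      using gt by (induction ns') auto
    ultimately show ?thesis
      using Cons g by (simp add: gaps_Cons[OF gt le])
  qed
qed

lemma inner_partial_sums_in_cut_lists:
  "ks \<in> compositions n \<Longrightarrow> inner_partial_sums ks \<in> cut_lists n \<and> length (inner_partial_sums ks) + 1 = length ks"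
proof (induction ks arbitrary: n rule: inner_partial_sums.induct)
  case (3 k k' ks)
  then have "0 < k" "k' # ks \<in> compositions (n - k)" "0 < k'" "k + sum_list (k' # ks) = n"
    by (auto simp: compositions_def)
  with "3.IH"[of "n - k"] show ?case by (auto simp: cut_lists_def sorted_wrt_map)
qed (auto simp: compositions_def cut_lists_def)

lemma gaps_inner_partial_sums: "ks \<in> compositions n \<Longrightarrow> gaps n (inner_partial_sums ks) = ks"
proof (induction ks arbitrary: n rule: inner_partial_sums.induct)
  case (2 k)
  then show ?case by (simp add: compositions_def gaps_Nil)
next
  case (3 k k' ks)
  then have "k' # ks \<in> compositions (n - k)" "k < n"
    by (auto simp: compositions_def)
  moreover have "\<forall>x\<in>set (inner_partial_sums (k' # ks)). 0 < x"
    using inner_partial_sums_in_cut_lists[OF \<open>k' # ks \<in> compositions (n - k)\<close>] by (auto simp: cut_lists_def)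
  ultimately show ?case
    using "3.IH" by (simp add: gaps_Cons comp_def)
qed (simp add: compositions_def)

lemma length_le_sum_list: "\<forall>k\<in>set ks. 0 < (k::nat) \<Longrightarrow> length ks \<le> sum_list ks"
  by (induction ks) auto

lemma bij_betw_gaps_Lambda_set:
  assumes "1 \<le> n"
  shows "bij_betw (gaps n) (Lambda_set n) (\<Union>l\<in>{2..n}. compositions_of_length l n)"
proof (rule bij_betw_byWitness[where f' = inner_partial_sums])
  show "\<forall>ns\<in>Lambda_set n. inner_partial_sums (gaps n ns) = ns"
    by (simp add: Lambda_set_eq_cut_lists inner_partial_sums_gaps)
  have "ks \<in> compositions n" if "ks \<in> compositions_of_length l n" "2 \<le> l" for ks l
    using that by (auto simp: compositions_def compositions_of_length_def)
  then show "\<forall>ks\<in>\<Union>l\<in>{2..n}. compositions_of_length l n. gaps n (inner_partial_sums ks) = ks"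
    by (auto simp: gaps_inner_partial_sums)
  show "gaps n ` Lambda_set n \<subseteq> (\<Union>l\<in>{2..n}. compositions_of_length l n)"
  proof
    fix ks assume "ks \<in> gaps n ` Lambda_set n"
    then obtain ns where ns: "ns \<in> cut_lists n" "ns \<noteq> []" "ks = gaps n ns"
      by (auto simp: Lambda_set_eq_cut_lists)
    then have "ks \<in> compositions n" "2 \<le> length ks"
      using gaps_in_compositions[OF ns(1) assms] by (auto simp: Suc_le_eq)
    then show "ks \<in> (\<Union>l\<in>{2..n}. compositions_of_length l n)"
      using length_le_sum_list[of ks] by (auto simp: compositions_def compositions_of_length_def)
  qed
  show "inner_partial_sums ` (\<Union>l\<in>{2..n}. compositions_of_length l n) \<subseteq> Lambda_set n"
  proof
    fix ns assume "ns \<in> inner_partial_sums ` (\<Union>l\<in>{2..n}. compositions_of_length l n)"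
    then obtain l ks where "ns = inner_partial_sums ks" "ks \<in> compositions_of_length l n" "l \<in> {2..n}"
      by blast
    then have "ns = inner_partial_sums ks" "ks \<in> compositions n" "2 \<le> length ks"
      by (auto simp: compositions_def compositions_of_length_def)
    then show "ns \<in> Lambda_set n"
      using inner_partial_sums_in_cut_lists[of ks n] by (auto simp: Lambda_set_eq_cut_lists)
  qed
qed

section \<open>Weighted paths\<close>

definition bounded_paths :: "nat \<Rightarrow> nat \<Rightarrow> nat \<Rightarrow> nat \<Rightarrow> nat list set" where
  "bounded_paths Bd k a b = {\<pi>. length \<pi> = Suc k \<and> set \<pi> \<subseteq> {..<Bd} \<and> \<pi> ! 0 = a \<and> \<pi> ! k = b}"

definition path_sum :: "nat \<Rightarrow> nat \<Rightarrow> (nat \<Rightarrow> nat \<Rightarrow> real) \<Rightarrow> nat \<Rightarrow> nat set \<Rightarrow> nat \<Rightarrow> nat \<Rightarrow> real" where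
  "path_sum Bd N g k S a b = (\<Sum>\<pi>\<in>bounded_paths Bd k a b. (\<Prod>i\<in>{1..k}. g (\<pi> ! (i - 1)) (\<pi> ! i)) *
      (if \<forall>s\<in>S \<inter> {1..k}. \<pi> ! s < N then 1 else 0))"

definition shift_set :: "nat \<Rightarrow> nat set \<Rightarrow> nat set"
  where "shift_set j S = {s. s + j \<in> S}"

lemma finite_bounded_paths: "finite (bounded_paths Bd k a b)"
proof (rule finite_subset)
  show "bounded_paths Bd k a b \<subseteq> {xs. set xs \<subseteq> {..<Bd} \<and> length xs = Suc k}"
    unfolding bounded_paths_def by auto
  show "finite {xs. set xs \<subseteq> {..<Bd} \<and> length xs = Suc k}"
    by (rule finite_lists_length_eq) simp
qed

lemma bounded_paths_Suc:
  assumes "a < Bd"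
  shows "bounded_paths Bd (Suc k) a b = (\<lambda>\<rho>. a # \<rho>) ` (\<Union>c<Bd. bounded_paths Bd k c b)"
proof (intro equalityI subsetI)
  fix \<pi> assume "\<pi> \<in> bounded_paths Bd (Suc k) a b"
  then obtain \<rho> where "\<pi> = a # \<rho>" "length \<rho> = Suc k" "set \<rho> \<subseteq> {..<Bd}" "\<rho> ! k = b"
    unfolding bounded_paths_def by (cases \<pi>) auto
  moreover have "\<rho> ! 0 < Bd" using calculation by (auto simp: nth_mem subset_iff)
  ultimately show "\<pi> \<in> (\<lambda>\<rho>. a # \<rho>) ` (\<Union>c<Bd. bounded_paths Bd k c b)"
    unfolding bounded_paths_def by blast
qed (use assms in \<open>auto simp: bounded_paths_def\<close>)

lemma path_sum_Suc:
  assumes "a < Bd"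
  shows "path_sum Bd N g (Suc k) S a b =
    (\<Sum>c<Bd. g a c * (if 1 \<in> S \<longrightarrow> c < N then 1 else 0) * path_sum Bd N g k (shift_set 1 S) c b)"
proof -
  define wt where "wt k S \<pi> = (\<Prod>i\<in>{1..k}. g (\<pi> ! (i - 1)) (\<pi> ! i)) *
      (if \<forall>s\<in>S \<inter> {1..k}. \<pi> ! s < N then (1::real) else 0)" for k S and \<pi> :: "nat list"
  have wt_Cons: "wt (Suc k) S (a # \<rho>) = g a c * (if 1 \<in> S \<longrightarrow> c < N then 1 else 0) * wt k (shift_set 1 S) \<rho>"
    if "\<rho> ! 0 = c" for c \<rho>
  proof -
    have ivl: "{1..Suc k} = insert 1 (Suc ` {1..k})"
      by (auto simp: image_iff)
    have prod: "(\<Prod>i\<in>{1..Suc k}. g ((a # \<rho>) ! (i - 1)) ((a # \<rho>) ! i)) = g a c * (\<Prod>i\<in>{1..k}. g (\<rho> ! (i - 1)) (\<rho> ! i))"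
      unfolding ivl using that
      by (subst prod.insert) (auto simp: prod.reindex nth_Cons' simp del: image_Suc_atLeastAtMost intro!: prod.cong)
    have "(\<forall>s\<in>S \<inter> {1..Suc k}. (a # \<rho>) ! s < N) \<longleftrightarrow> (\<forall>s\<in>insert 1 (Suc ` {1..k}). s \<in> S \<longrightarrow> (a # \<rho>) ! s < N)"
      unfolding ivl by blast
    also have "\<dots> \<longleftrightarrow> (1 \<in> S \<longrightarrow> c < N) \<and> (\<forall>s\<in>shift_set 1 S \<inter> {1..k}. \<rho> ! s < N)"
      using that by (auto simp: shift_set_def simp del: image_Suc_atLeastAtMost)
    finally show ?thesis unfolding wt_def prod by simp
  qed
  have "path_sum Bd N g (Suc k) S a b = (\<Sum>\<rho>\<in>(\<Union>c<Bd. bounded_paths Bd k c b). wt (Suc k) S (a # \<rho>))"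
    unfolding path_sum_def wt_def[symmetric] bounded_paths_Suc[OF assms]
    by (subst sum.reindex) (auto simp: inj_on_def)
  also have "\<dots> = (\<Sum>c<Bd. \<Sum>\<rho>\<in>bounded_paths Bd k c b. wt (Suc k) S (a # \<rho>))"
    by (rule sum.UNION_disjoint) (use finite_bounded_paths in \<open>auto simp: bounded_paths_def\<close>)
  also have "\<dots> = (\<Sum>c<Bd. g a c * (if 1 \<in> S \<longrightarrow> c < N then 1 else 0) * path_sum Bd N g k (shift_set 1 S) c b)"
    unfolding path_sum_def wt_def[symmetric] sum_distrib_left
    by (intro sum.cong refl wt_Cons) (simp add: bounded_paths_def)
  finally show ?thesis .
qed

lemma path_sum_cong_set: "S \<inter> {1..k} = S' \<inter> {1..k} \<Longrightarrow> path_sum Bd N g k S a b = path_sum Bd N g k S' a b"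
  unfolding path_sum_def by simp

lemma path_sum_diff:
  assumes "S \<subseteq> {1..k}"
  shows "path_sum Bd N g k {} a b - path_sum Bd N g k S a b
    = (\<Sum>\<pi>\<in>bounded_paths Bd k a b. (\<Prod>i\<in>{1..k}. g (\<pi> ! (i - 1)) (\<pi> ! i)) * (if \<exists>s\<in>S. N \<le> \<pi> ! s then 1 else 0))"
proof -
  have "S \<inter> {1..k} = S" using assms by auto
  then show ?thesis
    unfolding path_sum_def sum_subtractf[symmetric] by (intro sum.cong refl) (auto simp: not_less dest: leD)
qed

lemma path_sum_0: "path_sum Bd N g 0 S a b = (if a = b \<and> a < Bd then 1 else 0)"
proof -
  have "bounded_paths Bd 0 a b = (if a = b \<and> a < Bd then {[a]} else {})"
    unfolding bounded_paths_def by (auto simp: length_Suc_conv)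
  then show ?thesis unfolding path_sum_def by simp
qed

lemma path_sum_1: "a < Bd \<Longrightarrow> c < Bd \<Longrightarrow> path_sum Bd N g (Suc 0) {} a c = g a c"
  using path_sum_Suc[of a Bd N g 0 "{}" c] by (simp add: path_sum_0 shift_set_def if_distrib cong: if_cong)

lemma path_sum_add:
  assumes "1 \<le> k" "S \<inter> {1..<k} = {}" "a < Bd"
  shows "path_sum Bd N g (k + m) S a b =
    (\<Sum>c<Bd. path_sum Bd N g k {} a c * (if k \<in> S \<longrightarrow> c < N then 1 else 0) * path_sum Bd N g m (shift_set k S) c b)"
  using assms
proof (induction k arbitrary: S a rule: nat_induct_at_least)
  case base
  have "path_sum Bd N g (1 + m) S a b
      = (\<Sum>c<Bd. g a c * (if 1 \<in> S \<longrightarrow> c < N then 1 else 0) * path_sum Bd N g m (shift_set 1 S) c b)"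
    using path_sum_Suc[OF base(2)] by simp
  also have "\<dots> = (\<Sum>c<Bd. path_sum Bd N g 1 {} a c * (if 1 \<in> S \<longrightarrow> c < N then 1 else 0) * path_sum Bd N g m (shift_set 1 S) c b)"
    using base(2) by (intro sum.cong refl) (simp add: path_sum_1)
  finally show ?case .
next
  case (Suc k)
  have "1 \<notin> S" "shift_set 1 S \<inter> {1..<k} = {}"
    using Suc by (auto simp: shift_set_def)
  then have "path_sum Bd N g (Suc k + m) S a b = (\<Sum>d<Bd. g a d *
      (\<Sum>c<Bd. path_sum Bd N g k {} d c * (if Suc k \<in> S \<longrightarrow> c < N then 1 else 0) * path_sum Bd N g m (shift_set (Suc k) S) c b))"
    using Suc.IH path_sum_Suc[OF Suc.prems(2)] by (simp add: shift_set_def)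
  also have "\<dots> = (\<Sum>c<Bd. (\<Sum>d<Bd. g a d * path_sum Bd N g k {} d c) *
      (if Suc k \<in> S \<longrightarrow> c < N then 1 else 0) * path_sum Bd N g m (shift_set (Suc k) S) c b)"
    by (simp only: sum_distrib_left sum_distrib_right mult.assoc, rule sum.swap)
  also have "\<dots> = (\<Sum>c<Bd. path_sum Bd N g (Suc k) {} a c *
      (if Suc k \<in> S \<longrightarrow> c < N then 1 else 0) * path_sum Bd N g m (shift_set (Suc k) S) c b)"
    using path_sum_Suc[OF Suc.prems(2), of N g k "{}"] by (simp add: shift_set_def)
  finally show ?case .
qed

text \<open>The cut-off \<open>Bd\<close> is harmless: in \<open>k\<close> steps of a \<open>w\<close>-banded matrix a path moves by
  less than \<open>k \<cdot> w\<close>.\<close>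

lemma path_sum_eq_inf_mat_pow:
  assumes M: "banded w M"
  shows "a + k * w + 1 \<le> Bd \<Longrightarrow> path_sum Bd N (\<lambda>x y. M y x) k {} a b = inf_mat_pow M k b a"
proof (induction k arbitrary: a)
  case 0
  then show ?case by (simp add: path_sum_0)
next
  case (Suc k)
  have zero: "M c a = 0" if "a + w \<le> c" for c
    using M that unfolding banded_def by blast
  have "path_sum Bd N (\<lambda>x y. M y x) (Suc k) {} a b = (\<Sum>c<Bd. M c a * path_sum Bd N (\<lambda>x y. M y x) k {} c b)"
    using path_sum_Suc[of a Bd N _ k "{}" b] Suc.prems by (simp add: shift_set_def)
  also have "\<dots> = (\<Sum>c<Bd. inf_mat_pow M k b c * M c a)"
  proof (intro sum.cong refl)
    fix c
    show "M c a * path_sum Bd N (\<lambda>x y. M y x) k {} c b = inf_mat_pow M k b c * M c a"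
    proof (cases "a + w \<le> c")
      case False
      then have "c + k * w + 1 \<le> Bd" using Suc.prems by (simp add: algebra_simps)
      then show ?thesis using Suc.IH by simp
    qed (simp add: zero)
  qed
  also have "\<dots> = inf_mat_pow M (Suc k) b a"
    unfolding inf_mat_pow.simps
    by (rule inf_mat_mult_eq_sum[symmetric]) (use Suc.prems zero in auto)
  finally show ?case .
qed

fun trunc_pow_prod :: "nat \<Rightarrow> (nat \<Rightarrow> nat \<Rightarrow> real) \<Rightarrow> nat list \<Rightarrow> nat \<Rightarrow> nat \<Rightarrow> real" where
  "trunc_pow_prod N M [] = fmat_one"
| "trunc_pow_prod N M (k # ks) = fmat_mult N (\<lambda>i j. inf_mat_pow M k j i) (trunc_pow_prod N M ks)"

lemma path_sum_inner_partial_sums: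
  assumes M: "banded w M"
    and "ks \<noteq> []" "\<forall>k\<in>set ks. 0 < k" "sum_list ks \<le> n" "N + n * w + 1 \<le> Bd" "a < N" "b < N"
  shows "path_sum Bd N (\<lambda>x y. M y x) (sum_list ks) (set (inner_partial_sums ks)) a b = trunc_pow_prod N M ks a b"
  using assms(2-)
proof (induction ks arbitrary: a b n rule: inner_partial_sums.induct)
  case (2 k)
  have "k * w \<le> n * w" using 2 by simp
  then have "path_sum Bd N (\<lambda>x y. M y x) k {} a b = inf_mat_pow M k b a"
    using 2 by (intro path_sum_eq_inf_mat_pow[OF M]) linarith
  then show ?case using 2 by (simp add: fmat_mult_one_right)
next
  case (3 k k' ks)
  define S where "S = set (inner_partial_sums (k # k' # ks))"
  have S: "S = insert k ((\<lambda>s. s + k) ` set (inner_partial_sums (k' # ks)))" unfolding S_def by simp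
  have "k * w \<le> n * w" using "3.prems" by simp
  then have pow: "path_sum Bd N (\<lambda>x y. M y x) k {} a c = inf_mat_pow M k c a" for c
    using "3.prems" by (intro path_sum_eq_inf_mat_pow[OF M]) linarith
  have rest: "path_sum Bd N (\<lambda>x y. M y x) (sum_list (k' # ks)) (shift_set k S) c b = trunc_pow_prod N M (k' # ks) c b"
    if "c < N" for c
  proof -
    have shift: "shift_set k S \<inter> {1..sum_list (k' # ks)} = set (inner_partial_sums (k' # ks)) \<inter> {1..sum_list (k' # ks)}"
      unfolding S shift_set_def by auto
    have "(n - k) * w \<le> n * w" by simp
    then have "path_sum Bd N (\<lambda>x y. M y x) (sum_list (k' # ks)) (set (inner_partial_sums (k' # ks))) c b
        = trunc_pow_prod N M (k' # ks) c b"
      by (intro "3.IH") (use "3.prems" that in auto)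
    then show ?thesis by (simp only: path_sum_cong_set[OF shift])
  qed
  have S1: "S \<inter> {1..<k} = {}"
    using "3.prems" inner_partial_sums_in_cut_lists[of "k' # ks" "sum_list (k' # ks)"]
    by (auto simp: S compositions_def cut_lists_def)
  have kS: "k \<in> S" by (simp add: S_def)
  have "path_sum Bd N (\<lambda>x y. M y x) (k + sum_list (k' # ks)) S a b
      = (\<Sum>c<Bd. path_sum Bd N (\<lambda>x y. M y x) k {} a c * (if k \<in> S \<longrightarrow> c < N then 1 else 0)
          * path_sum Bd N (\<lambda>x y. M y x) (sum_list (k' # ks)) (shift_set k S) c b)"
    by (rule path_sum_add) (use "3.prems" S1 in auto)
  also have "\<dots> = (\<Sum>c<Bd. if c < N then inf_mat_pow M k c a * trunc_pow_prod N M (k' # ks) c b else 0)"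
    by (intro sum.cong refl) (simp add: kS pow rest[simplified])
  also have "\<dots> = trunc_pow_prod N M (k # k' # ks) a b"
  proof -
    have "{c \<in> {..<Bd}. c < N} = {..<N}" using "3.prems" by auto
    then show ?thesis
      by (simp add: sum.inter_filter[symmetric] fmat_mult_def)
  qed
  finally show ?case by (simp add: S_def)
qed simp

lemma Gamma_set_bounded:
  assumes M: "banded w M" and \<pi>: "\<pi> \<in> Gamma_set n ns N M"
  shows "set \<pi> \<subseteq> {..<N + n * w}"
proof -
  have len: "length \<pi> = n + 1" and step: "\<forall>i\<in>{1..n}. M (\<pi> ! i) (\<pi> ! (i - 1)) \<noteq> 0" and "\<pi> ! 0 < N"
    using \<pi> by (auto simp: Gamma_set_def)
  have bnd: "\<pi> ! i < N + i * w" if "i \<le> n" for i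
    using that
  proof (induction i)
    case 0 then show ?case using \<open>\<pi> ! 0 < N\<close> by simp
  next
    case (Suc i)
    then have "M (\<pi> ! Suc i) (\<pi> ! i) \<noteq> 0" using step by force
    then have "\<pi> ! Suc i < \<pi> ! i + w" using M unfolding banded_def by (meson not_less)
    then show ?case using Suc by simp
  qed
  have "\<pi> ! i < N + n * w" if "i \<le> n" for i
    using bnd[OF that] mult_le_mono1[OF that, of w] by linarith
  then show ?thesis
    using len by (auto simp: in_set_conv_nth less_Suc_eq_le)
qed

lemma Gamma_set_sum_eq_path_sums:
  assumes M: "banded w M" and ns: "ns \<in> Lambda_set n" and Bd: "N + n * w + 1 \<le> Bd"
  shows "(\<Sum>\<pi>\<in>Gamma_set n ns N M. \<Prod>i\<in>{1..n}. M (\<pi> ! i) (\<pi> ! (i - 1)))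
       = (\<Sum>a<N. path_sum Bd N (\<lambda>x y. M y x) n {} a a - path_sum Bd N (\<lambda>x y. M y x) n (set ns) a a)"
proof -
  define wt where "wt \<pi> = (\<Prod>i\<in>{1..n}. M (\<pi> ! i) (\<pi> ! (i - 1)))" for \<pi> :: "nat list"
  define closed_paths where "closed_paths = (\<Union>a<N. bounded_paths Bd n a a)"
  define exits where "exits = {\<pi>\<in>closed_paths. \<exists>s\<in>set ns. N \<le> \<pi> ! s}"
  have ns_sub: "ns \<noteq> []" "set ns \<subseteq> {1..<n}" using ns by (auto simp: Lambda_set_def)
  have fin: "finite closed_paths" unfolding closed_paths_def by (auto simp: finite_bounded_paths)
  have "(\<Sum>a<N. path_sum Bd N (\<lambda>x y. M y x) n {} a a - path_sum Bd N (\<lambda>x y. M y x) n (set ns) a a)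
      = (\<Sum>a<N. \<Sum>\<pi>\<in>bounded_paths Bd n a a. wt \<pi> * (if \<exists>s\<in>set ns. N \<le> \<pi> ! s then 1 else 0))"
    using ns_sub unfolding wt_def by (intro sum.cong refl path_sum_diff) auto
  also have "\<dots> = (\<Sum>\<pi>\<in>closed_paths. wt \<pi> * (if \<exists>s\<in>set ns. N \<le> \<pi> ! s then 1 else 0))"
    unfolding closed_paths_def
    by (rule sum.UNION_disjoint[symmetric]) (use finite_bounded_paths in \<open>auto simp: bounded_paths_def\<close>)
  also have "\<dots> = (\<Sum>\<pi>\<in>exits. wt \<pi>)"
    unfolding exits_def by (simp add: sum.inter_filter[OF fin, symmetric] if_distrib cong: if_cong)
  also have "\<dots> = (\<Sum>\<pi>\<in>Gamma_set n ns N M. wt \<pi>)"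
  proof (rule sum.mono_neutral_right)
    show "finite exits" unfolding exits_def using fin by simp
    show "Gamma_set n ns N M \<subseteq> exits"
    proof
      fix \<pi> assume \<pi>: "\<pi> \<in> Gamma_set n ns N M"
      then have "\<pi> \<in> bounded_paths Bd n (\<pi> ! 0) (\<pi> ! 0)" "\<pi> ! 0 < N"
        using Gamma_set_bounded[OF M \<pi>] Bd by (auto simp: Gamma_set_def bounded_paths_def)
      moreover have "\<exists>s\<in>set ns. N \<le> \<pi> ! s"
        using \<pi> ns_sub by (auto simp: Gamma_set_def Max_ge_iff)
      ultimately show "\<pi> \<in> exits" unfolding exits_def closed_paths_def by blast
    qed
    show "\<forall>\<pi>\<in>exits - Gamma_set n ns N M. wt \<pi> = 0"
    proof
      fix \<pi> assume \<pi>: "\<pi> \<in> exits - Gamma_set n ns N M"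
      then have "\<pi> ! 0 = \<pi> ! n" "\<pi> ! 0 < N" "length \<pi> = n + 1" "Max ((\<lambda>m. \<pi> ! m) ` set ns) \<ge> N"
        using ns_sub by (auto simp: exits_def closed_paths_def bounded_paths_def Max_ge_iff)
      then obtain i where "i \<in> {1..n}" "M (\<pi> ! i) (\<pi> ! (i - 1)) = 0"
        using \<pi> by (auto simp: Gamma_set_def)
      then show "wt \<pi> = 0" unfolding wt_def by (meson finite_atLeastAtMost prod_zero)
    qed
  qed
  finally show ?thesis unfolding wt_def ..
qed

lemma Gamma_set_sum_eq_trace_diff:
  assumes M: "banded w M" and ns: "ns \<in> Lambda_set n"
  shows "(\<Sum>\<pi>\<in>Gamma_set n ns N M. \<Prod>i\<in>{1..n}. M (\<pi> ! i) (\<pi> ! (i - 1)))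
       = fmat_trace N (trunc_pow_prod N M [n]) - fmat_trace N (trunc_pow_prod N M (gaps n ns))"
proof -
  define Bd where "Bd = N + n * w + 1"
  have cut: "ns \<in> cut_lists n" and "ns \<noteq> []" using ns by (auto simp: Lambda_set_eq_cut_lists)
  then have "1 \<le> n" using ns by (cases ns) (auto simp: Lambda_set_def)
  then have comp: "gaps n ns \<in> compositions n" by (rule gaps_in_compositions[OF cut])
  have diag: "path_sum Bd N (\<lambda>x y. M y x) (sum_list ks) (set (inner_partial_sums ks)) a a = trunc_pow_prod N M ks a a"
    if "ks \<in> compositions n" "a < N" for ks a
    using that by (intro path_sum_inner_partial_sums[OF M, of _ n]) (auto simp: compositions_def Bd_def)
  have "(\<Sum>\<pi>\<in>Gamma_set n ns N M. \<Prod>i\<in>{1..n}. M (\<pi> ! i) (\<pi> ! (i - 1)))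
      = (\<Sum>a<N. path_sum Bd N (\<lambda>x y. M y x) n {} a a - path_sum Bd N (\<lambda>x y. M y x) n (set ns) a a)"
    by (rule Gamma_set_sum_eq_path_sums[OF M ns]) (simp add: Bd_def)
  also from diag[of "[n]"] diag[of "gaps n ns"] comp \<open>1 \<le> n\<close>
  have "\<dots> = fmat_trace N (trunc_pow_prod N M [n]) - fmat_trace N (trunc_pow_prod N M (gaps n ns))"
    by (simp add: sum_subtractf fmat_trace_def inner_partial_sums_gaps[OF cut] compositions_def del: trunc_pow_prod.simps)
  finally show ?thesis .
qed

section \<open>Moment generating series\<close>

lemma power_sum_div_fact:
  fixes y :: "'i \<Rightarrow> 'a::field_char_0"
  assumes "finite I"
  shows "(\<Sum>k\<in>I. y k) ^ m / fact m = (\<Sum>X\<in>multisets_of_size I m. \<Prod>k\<in>I. y k ^ count X k / fact (count X k))"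
proof -
  have exp_sum: "fps_exp (\<Sum>k\<in>I. y k) = (\<Prod>k\<in>I. fps_exp (y k))"
    using assms by (induction I rule: finite_induct) (auto simp: fps_exp_add_mult)
  have "(\<Sum>k\<in>I. y k) ^ m / fact m = fps_nth (fps_exp (\<Sum>k\<in>I. y k)) m"
    by simp
  also have "\<dots> = (\<Sum>X\<in>multisets_of_size I m. \<Prod>k\<in>I. fps_nth (fps_exp (y k)) (count X k))"
    unfolding exp_sum by (rule fps_prod_nth'[OF assms])
  finally show ?thesis by simp
qed

definition exp_series :: "(nat \<Rightarrow> nat \<Rightarrow> real) \<Rightarrow> nat \<Rightarrow> nat \<Rightarrow> real fps"
  where "exp_series M a b = Abs_fps (\<lambda>j. inf_mat_pow M j a b / fact j)"

lemma fps_nth_fmat_det_exp_series: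
  "fact N * fps_nth (fmat_det N (exp_series M)) m
    = (\<Sum>\<sigma> | \<sigma> permutes {..<N}. \<Sum>\<tau> | \<tau> permutes {..<N}. signof \<sigma> * signof \<tau> *
        (\<Sum>X\<in>multisets_of_size {..<N} m. \<Prod>k<N. inf_mat_pow M (count X k) (\<sigma> k) (\<tau> k) / fact (count X k)))"
proof -
  have "fact N * fps_nth (fmat_det N (exp_series M)) m = fps_nth (of_nat (fact N) * fmat_det N (exp_series M)) m"
    by (simp flip: fps_of_nat)
  also have "\<dots> = fps_nth (\<Sum>\<sigma> | \<sigma> permutes {..<N}. \<Sum>\<tau> | \<tau> permutes {..<N}.
      signof \<sigma> * signof \<tau> * (\<Prod>i<N. exp_series M (\<sigma> i) (\<tau> i))) m"
    by (simp only: sum_permutations_pairs_eq_fact_det)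
  also have "\<dots> = (\<Sum>\<sigma> | \<sigma> permutes {..<N}. \<Sum>\<tau> | \<tau> permutes {..<N}. signof \<sigma> * signof \<tau> *
      fps_nth (\<Prod>i<N. exp_series M (\<sigma> i) (\<tau> i)) m)"
    by (simp add: fps_sum_nth mult.assoc flip: fps_of_int)
  finally show ?thesis
    by (simp add: fps_prod_nth' exp_series_def)
qed

lemma AE_nonneg_if_density_total:
  fixes f :: "'a \<Rightarrow> real"
  assumes f: "integrable M f" and int: "0 \<le> integral\<^sup>L M f"
    and total: "emeasure (density M (\<lambda>x. ennreal (f x))) (space M) = ennreal (integral\<^sup>L M f)"
  shows "AE x in M. 0 \<le> f x"
proof -
  define g where "g x = max 0 (f x)" for x
  have g: "integrable M g" unfolding g_def using f by auto
  have "ennreal (integral\<^sup>L M g) = (\<integral>\<^sup>+ x. ennreal (g x) \<partial>M)"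
    by (rule nn_integral_eq_integral[OF g, symmetric]) (simp add: g_def)
  also have "\<dots> = emeasure (density M (\<lambda>x. ennreal (f x))) (space M)"
    using borel_measurable_integrable[OF f]
    by (simp add: emeasure_density g_def ennreal_max_0 nn_integral_set_ennreal[symmetric])
  finally have "integral\<^sup>L M g = integral\<^sup>L M f"
    using int total by (simp add: g_def)
  then have "(\<integral>x. g x - f x \<partial>M) = 0" using f g by simp
  then have "AE x in M. g x - f x = 0"
    using f g by (subst (asm) integral_nonneg_eq_0_iff_AE) (auto simp: g_def)
  then show ?thesis by eventually_elim (simp add: g_def)
qed

lemma integral_distributed_AE_nonneg:
  fixes f g :: "'b \<Rightarrow> real"
  assumes X: "distributed M N X (\<lambda>x. ennreal (f x))" and f: "f \<in> borel_measurable N"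
    and nonneg: "AE x in N. 0 \<le> f x" and g: "g \<in> borel_measurable N"
  shows "(\<integral>\<omega>. g (X \<omega>) \<partial>M) = (\<integral>x. f x * g x \<partial>N)"
proof -
  have "(\<integral>\<omega>. g (X \<omega>) \<partial>M) = integral\<^sup>L (density N (\<lambda>x. ennreal (f x))) g"
    using integral_distr[OF distributed_measurable[OF X] g] distributed_distr_eq_density[OF X] by simp
  also have "\<dots> = (\<integral>x. f x * g x \<partial>N)"
    using integral_density[OF g f nonneg] by simp
  finally show ?thesis .
qed

lemma det_biorth_kernel:
  "det (mat N N (\<lambda>(i, j). biorth_kernel P Q N (x i) (x j)))
    = (\<Sum>\<sigma> | \<sigma> permutes {..<N}. \<Sum>\<tau> | \<tau> permutes {..<N}.
        signof \<sigma> * signof \<tau> * (\<Prod>i<N. P (\<sigma> i) (x i) * Q (\<tau> i) (x i)))"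
proof -
  define PM where "PM = mat N N (\<lambda>(i, k). P k (x i))"
  define QM where "QM = mat N N (\<lambda>(j, k). Q k (x j))"
  have PM: "PM \<in> carrier_mat N N" and QM: "QM \<in> carrier_mat N N" by (auto simp: PM_def QM_def)
  have "mat N N (\<lambda>(i, j). biorth_kernel P Q N (x i) (x j)) = PM * transpose_mat QM"
    by (rule eq_matI) (auto simp: PM_def QM_def scalar_prod_def biorth_kernel_def atLeast0LessThan)
  then have "det (mat N N (\<lambda>(i, j). biorth_kernel P Q N (x i) (x j))) = det PM * det QM"
    using det_mult[OF PM, of "transpose_mat QM"] det_transpose[OF QM] QM by simp
  also have "\<dots> = fmat_det N (\<lambda>i k. P k (x i)) * fmat_det N (\<lambda>i k. Q k (x i))"
    unfolding PM_def QM_def fmat_det_def ..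
  finally show ?thesis
    by (simp add: fmat_det_eq_sum_permutations sum_product prod.distrib algebra_simps)
qed

section \<open>Cumulants as sums over paths\<close>

lemma fmat_coeff_prod_exp_series:
  assumes "\<forall>k\<in>set ks. 0 < k"
  shows "fmat_coeff_prod N (\<lambda>i j. exp_series M j i - fmat_one i j) ks i j = trunc_pow_prod N M ks i j / (\<Prod>k\<leftarrow>ks. fact k)"
  using assms
proof (induction ks arbitrary: i j)
  case (Cons k ks)
  then show ?case
    by (simp add: fmat_mult_def exp_series_def fps_nth_fmat_one sum_divide_distrib)
qed simp

lemma fps_ln_fmat_det_exp_series:
  "fps_nth (fps_ln 1 oo (fmat_det N (exp_series M) - 1)) n
    = (\<Sum>l\<in>{1..n}. (-1) ^ (l + 1) / real l *
        (\<Sum>ks\<in>compositions_of_length l n. fmat_trace N (trunc_pow_prod N M ks) / (\<Prod>k\<leftarrow>ks. fact k)))"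
proof -
  define A where "A = (\<lambda>i j. exp_series M j i - fmat_one i j)"
  have A: "fmat_subdegree_ge N 1 A"
    unfolding fmat_subdegree_ge_def A_def by (simp add: exp_series_def fmat_one_def)
  have "fmat_det N (exp_series M) = fmat_det N (\<lambda>i j. fmat_one i j + A i j)"
    unfolding A_def by (simp flip: fmat_det_transpose[of N "exp_series M"])
  moreover have "fps_nth (fmat_trace N (fmat_pow N A l)) n
      = (\<Sum>ks\<in>compositions_of_length l n. fmat_trace N (trunc_pow_prod N M ks) / (\<Prod>k\<leftarrow>ks. fact k))" for l
    unfolding fps_nth_fmat_trace_pow[OF A]
    by (intro sum.cong refl) (simp add: fmat_trace_def A_def fmat_coeff_prod_exp_series
        compositions_of_length_def sum_divide_distrib)
  ultimately show ?thesis
    using fps_ln_fmat_det_one_plus[OF A] by simp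
qed

theorem fps_ln_fmat_det_exp_series_eq_Gamma_sum:
  assumes M: "banded w M" and n: "n \<ge> 2"
  shows "fact n * fps_nth (fps_ln 1 oo (fmat_det N (exp_series M) - 1)) n
    = (\<Sum>ns\<in>Lambda_set n. mho n ns * (\<Sum>\<pi>\<in>Gamma_set n ns N M. \<Prod>i\<in>{1..n}. M (\<pi> ! i) (\<pi> ! (i - 1))))"
proof -
  define c where "c l = (-1) ^ (l + 1) / real l" for l :: nat
  define \<tau> where "\<tau> ks = fmat_trace N (trunc_pow_prod N M ks)" for ks
  define \<phi> where "\<phi> ks = (\<Prod>k\<leftarrow>ks. fact k :: real)" for ks
  define h where "h ks = - c (length ks) * fact n / \<phi> ks * (\<tau> [n] - \<tau> ks)" for ks
  define A2 where "A2 = (\<Sum>l\<in>{2..n}. c l * (\<Sum>ks\<in>compositions_of_length l n. \<tau> ks / \<phi> ks))"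
  have split: "{1..n} = insert 1 {2..n}" using n by auto
  have \<phi>_nonzero: "\<phi> ks \<noteq> 0" for ks unfolding \<phi>_def by (induction ks) auto
  have "fact n * fps_nth (fps_ln 1 oo (fmat_det N (exp_series M) - 1)) n = fact n * (\<tau> [n] / fact n + A2)"
    using n unfolding fps_ln_fmat_det_exp_series split
    by (simp add: compositions_of_length_1 A2_def c_def \<tau>_def \<phi>_def)
  also have "\<dots> = - \<tau> [n] * fact n * (\<Sum>l\<in>{2..n}. c l * (\<Sum>ks\<in>compositions_of_length l n. 1 / \<phi> ks)) + fact n * A2"
    using sum_compositions_inverse_fact[OF n] unfolding c_def \<phi>_def by (simp add: distrib_left)
  also have "\<dots> = (\<Sum>l\<in>{2..n}. \<Sum>ks\<in>compositions_of_length l n. h ks)"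
  proof -
    have "(\<Sum>l\<in>{2..n}. \<Sum>ks\<in>compositions_of_length l n. h ks) = (\<Sum>l\<in>{2..n}. \<Sum>ks\<in>compositions_of_length l n.
        fact n * (c l * (\<tau> ks / \<phi> ks)) - \<tau> [n] * fact n * (c l * (1 / \<phi> ks)))"
      by (intro sum.cong refl) (simp add: h_def \<phi>_nonzero compositions_of_length_def field_simps)
    then show ?thesis
      by (simp add: A2_def sum_subtractf sum_distrib_left sum_negf)
  qed
  also have "\<dots> = (\<Sum>ks\<in>(\<Union>l\<in>{2..n}. compositions_of_length l n). h ks)"
    by (rule sum.UNION_disjoint[symmetric]) (use finite_compositions_of_length in \<open>auto simp: compositions_of_length_def\<close>)
  also have "\<dots> = (\<Sum>ns\<in>Lambda_set n. h (gaps n ns))"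
    using n by (intro sum.reindex_bij_betw[symmetric] bij_betw_gaps_Lambda_set) simp
  also have "\<dots> = (\<Sum>ns\<in>Lambda_set n. mho n ns * (\<Sum>\<pi>\<in>Gamma_set n ns N M. \<Prod>i\<in>{1..n}. M (\<pi> ! i) (\<pi> ! (i - 1))))"
  proof (intro sum.cong refl)
    fix ns assume ns: "ns \<in> Lambda_set n"
    show "h (gaps n ns) = mho n ns * (\<Sum>\<pi>\<in>Gamma_set n ns N M. \<Prod>i\<in>{1..n}. M (\<pi> ! i) (\<pi> ! (i - 1)))"
      unfolding Gamma_set_sum_eq_trace_diff[OF M ns] by (simp add: h_def mho_def c_def \<tau>_def \<phi>_def)
  qed
  finally show ?thesis .
qed

section \<open>Biorthogonal ensembles\<close>

locale biorthogonal_ensemble =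
  fixes S :: "'a measure" and \<xi> :: "'a \<Rightarrow> nat \<Rightarrow> real" and \<mu> :: "real measure"
    and P Q :: "nat \<Rightarrow> real \<Rightarrow> real" and J :: "nat \<Rightarrow> nat \<Rightarrow> real"
    and W N :: nat and F :: "real poly"
  assumes prob: "prob_space S"
    and sets_\<mu>: "sets \<mu> = sets borel" and sigma_finite: "sigma_finite_measure \<mu>"
    and biorth: "\<forall>k m. integrable \<mu> (\<lambda>x. P k x * Q m x)
               \<and> (\<integral>x. P k x * Q m x \<partial>\<mu>) = (if k = m then 1 else 0)"
    and distr: "distributed S (PiM {..<N} (\<lambda>_. \<mu>)) \<xi>
           (\<lambda>x. ennreal (det (Matrix.mat N N (\<lambda>(i, j). biorth_kernel P Q N (x i) (x j))) / fact N))"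
    and J_band: "\<forall>i j. int W \<le> \<bar>int i - int j\<bar> \<longrightarrow> J i j = 0"
    and recurrence: "\<forall>x i. x * P i x = (\<Sum>j<i + W. J i j * P j x)"
begin

abbreviation config_space :: "(nat \<Rightarrow> real) measure"
  where "config_space \<equiv> PiM {..<N} (\<lambda>_. \<mu>)"

abbreviation kernel_det :: "(nat \<Rightarrow> real) \<Rightarrow> real"
  where "kernel_det x \<equiv> det (Matrix.mat N N (\<lambda>(i, j). biorth_kernel P Q N (x i) (x j)))"

lemma banded_J: "banded W J"
  unfolding banded_def using J_band by force

lemma banded_poly_J: "banded (degree F * W + 1) (poly_inf_mat F J)"
  by (rule banded_poly_inf_mat[OF banded_J])

lemma poly_power_recurrence:
  assumes "a + m * (degree F * W + 1) + 1 \<le> R"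
  shows "poly F x ^ m * P a x = (\<Sum>c<R. inf_mat_pow (poly_inf_mat F J) m a c * P c x)"
proof -
  have "x * P a x = (\<Sum>c<R. J a c * P c x)" if "a + W \<le> R" for a R
    by (rule recurrence_extend[OF banded_J _ that, where g = "\<lambda>y. y"]) (use recurrence in simp)
  then have "poly F x * P a x = (\<Sum>c<R. poly_inf_mat F J a c * P c x)"
    if "a + (degree F * W + 1) \<le> R" for a R
    using poly_recurrence[OF banded_J _ that] by blast
  then show ?thesis
    using recurrence_power[OF banded_poly_J, of "poly F" x P] assms by blast
qed

lemma integral_poly_power_biorth:
  "integrable \<mu> (\<lambda>x. poly F x ^ m * P a x * Q b x)"
  "(\<integral>x. poly F x ^ m * P a x * Q b x \<partial>\<mu>) = inf_mat_pow (poly_inf_mat F J) m a b"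
proof -
  define R where "R = a + m * (degree F * W + 1) + 1 + b + 1"
  have R: "a + m * (degree F * W + 1) + 1 \<le> R" "b < R" by (simp_all add: R_def)
  have eq: "poly F x ^ m * P a x * Q b x = (\<Sum>c<R. inf_mat_pow (poly_inf_mat F J) m a c * (P c x * Q b x))" for x
    by (simp only: poly_power_recurrence[OF R(1)] sum_distrib_right mult.assoc)
  show "integrable \<mu> (\<lambda>x. poly F x ^ m * P a x * Q b x)"
    unfolding eq using biorth by auto
  have "(\<integral>x. poly F x ^ m * P a x * Q b x \<partial>\<mu>) = (\<Sum>c<R. inf_mat_pow (poly_inf_mat F J) m a c * (if c = b then 1 else 0))"
    unfolding eq using biorth by (simp add: integral_sum)
  also have "\<dots> = (\<Sum>c<R. if c = b then inf_mat_pow (poly_inf_mat F J) m a c else 0)"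
    by (intro sum.cong) auto
  also have "\<dots> = inf_mat_pow (poly_inf_mat F J) m a b"
    using R(2) by simp
  finally show "(\<integral>x. poly F x ^ m * P a x * Q b x \<partial>\<mu>) = inf_mat_pow (poly_inf_mat F J) m a b" .
qed

text \<open>Andreief's identity: the kernel determinant is a product of two determinants, so its
  integral against a product function factorizes into one-dimensional biorthogonality integrals.\<close>

lemma andreief:
  fixes c :: "nat \<Rightarrow> nat"
  shows "integrable config_space (\<lambda>x. (\<Prod>i<N. poly F (x i) ^ c i) * kernel_det x)"
    and "(\<integral>x. (\<Prod>i<N. poly F (x i) ^ c i) * kernel_det x \<partial>config_space)
        = (\<Sum>\<sigma> | \<sigma> permutes {..<N}. \<Sum>\<tau> | \<tau> permutes {..<N}.
            signof \<sigma> * signof \<tau> * (\<Prod>i<N. inf_mat_pow (poly_inf_mat F J) (c i) (\<sigma> i) (\<tau> i)))"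
proof -
  interpret product_sigma_finite "\<lambda>_. \<mu>"
    unfolding product_sigma_finite_def using sigma_finite by simp
  define h where "h \<sigma> \<tau> i y = poly F y ^ c i * P (\<sigma> i) y * Q (\<tau> i) y" for \<sigma> \<tau> :: "nat \<Rightarrow> nat" and i y
  have eq: "(\<Prod>i<N. poly F (x i) ^ c i) * kernel_det x
      = (\<Sum>\<sigma> | \<sigma> permutes {..<N}. \<Sum>\<tau> | \<tau> permutes {..<N}. signof \<sigma> * signof \<tau> * (\<Prod>i<N. h \<sigma> \<tau> i (x i)))" for x
    unfolding det_biorth_kernel h_def by (simp add: sum_distrib_left prod.distrib algebra_simps)
  have h: "integrable \<mu> (h \<sigma> \<tau> i)" "integral\<^sup>L \<mu> (h \<sigma> \<tau> i) = inf_mat_pow (poly_inf_mat F J) (c i) (\<sigma> i) (\<tau> i)"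
    for \<sigma> \<tau> i
    unfolding h_def by (rule integral_poly_power_biorth)+
  have int: "integrable config_space (\<lambda>x. \<Prod>i<N. h \<sigma> \<tau> i (x i))" for \<sigma> \<tau>
    by (rule product_integrable_prod) (auto simp: h)
  have "(\<integral>x. (\<Prod>i<N. h \<sigma> \<tau> i (x i)) \<partial>config_space) = (\<Prod>i<N. inf_mat_pow (poly_inf_mat F J) (c i) (\<sigma> i) (\<tau> i))"
    for \<sigma> \<tau>
    by (subst product_integral_prod) (auto simp: h)
  then show "(\<integral>x. (\<Prod>i<N. poly F (x i) ^ c i) * kernel_det x \<partial>config_space)
      = (\<Sum>\<sigma> | \<sigma> permutes {..<N}. \<Sum>\<tau> | \<tau> permutes {..<N}.
          signof \<sigma> * signof \<tau> * (\<Prod>i<N. inf_mat_pow (poly_inf_mat F J) (c i) (\<sigma> i) (\<tau> i)))"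
    unfolding eq by (simp add: integral_sum integrable_sum int)
  show "integrable config_space (\<lambda>x. (\<Prod>i<N. poly F (x i) ^ c i) * kernel_det x)"
    unfolding eq by (simp add: int)
qed

lemma integral_kernel_det:
  "integrable config_space kernel_det" "(\<integral>x. kernel_det x \<partial>config_space) = fact N"
proof -
  have "(\<integral>x. kernel_det x \<partial>config_space) = of_nat (fact N) * fmat_det N (fmat_one :: nat \<Rightarrow> nat \<Rightarrow> real)"
    using andreief(2)[of "\<lambda>_. 0"] sum_permutations_pairs_eq_fact_det[of "fmat_one :: nat \<Rightarrow> nat \<Rightarrow> real" N]
    by (simp add: fmat_one_def)
  then show "(\<integral>x. kernel_det x \<partial>config_space) = fact N"
    by (simp add: fmat_det_one)
  show "integrable config_space kernel_det"
    using andreief(1)[of "\<lambda>_. 0"] by simp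
qed

lemma AE_kernel_det_nonneg: "AE x in config_space. 0 \<le> kernel_det x"
proof -
  interpret prob_space S by (rule prob)
  let ?f = "\<lambda>x. kernel_det x / fact N"
  have \<xi>: "\<xi> \<in> measurable S config_space" by (rule distributed_measurable[OF distr])
  have "emeasure (density config_space (\<lambda>x. ennreal (?f x))) (space config_space)
      = emeasure (distr S config_space \<xi>) (space config_space)"
    using distributed_distr_eq_density[OF distr] by simp
  also have "\<dots> = emeasure S (space S)"
    using \<xi> by (simp add: emeasure_distr measurable_space vimage_def Int_absorb1 subset_iff)
  finally have "emeasure (density config_space (\<lambda>x. ennreal (?f x))) (space config_space) = 1"
    by (simp add: emeasure_space_1)
  then have "AE x in config_space. 0 \<le> ?f x"
    using integral_kernel_det by (intro AE_nonneg_if_density_total) simp_all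
  moreover have "(0::real) < fact N" by simp
  ultimately show ?thesis by (auto elim: AE_mp simp: zero_le_divide_iff)
qed

lemma moment_linear_statistic:
  "(\<integral>\<omega>. (\<Sum>k<N. poly F (\<xi> \<omega> k)) ^ m \<partial>S) = fact m * fps_nth (fmat_det N (exp_series (poly_inf_mat F J))) m"
proof -
  define wt where "wt X = (\<Prod>k<N. 1 / fact (count X k) :: real)" for X
  have "borel_measurable \<mu> = (borel_measurable borel :: (real \<Rightarrow> real) set)"
    by (rule measurable_cong_sets[OF sets_\<mu> refl])
  moreover have "poly F \<in> borel_measurable borel"
    by (rule borel_measurable_continuous_onI) (intro continuous_intros)
  ultimately have poly_F: "poly F \<in> borel_measurable \<mu>"
    by simp
  have coord: "(\<lambda>x. poly F (x k)) \<in> borel_measurable config_space" if "k < N" for k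
    using measurable_compose[OF measurable_component_singleton[of k "{..<N}" "\<lambda>_. \<mu>"] poly_F] that by simp
  have expand: "(\<Sum>k<N. poly F (x k)) ^ m
      = fact m * (\<Sum>X\<in>multisets_of_size {..<N} m. wt X * (\<Prod>k<N. poly F (x k) ^ count X k))" for x
    using power_sum_div_fact[of "{..<N}" "\<lambda>k. poly F (x k)" m]
    by (simp add: wt_def field_simps prod.distrib[symmetric])
  have "(\<integral>\<omega>. (\<Sum>k<N. poly F (\<xi> \<omega> k)) ^ m \<partial>S)
      = (\<integral>x. kernel_det x / fact N * (\<Sum>k<N. poly F (x k)) ^ m \<partial>config_space)"
    using integral_kernel_det AE_kernel_det_nonneg coord
    by (intro integral_distributed_AE_nonneg[OF distr])
      (auto intro!: borel_measurable_integrable borel_measurable_power borel_measurable_sum)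
  also have "\<dots> = fact m / fact N * (\<Sum>X\<in>multisets_of_size {..<N} m. wt X *
      (\<integral>x. (\<Prod>k<N. poly F (x k) ^ count X k) * kernel_det x \<partial>config_space))"
    unfolding expand
    by (simp add: integral_sum andreief(1) sum_distrib_left sum_distrib_right algebra_simps)
  also have "\<dots> = fact m / fact N * (fact N * fps_nth (fmat_det N (exp_series (poly_inf_mat F J))) m)"
    unfolding fps_nth_fmat_det_exp_series
    by (simp add: andreief(2) wt_def sum_distrib_left prod_dividef algebra_simps
        sum.swap[of _ "multisets_of_size {..<N} m"])
  finally show ?thesis by simp
qed

lemma moment_fps_linear_statistic:
  "moment_fps S (\<lambda>\<omega>. \<Sum>k<N. poly F (\<xi> \<omega> k)) = fmat_det N (exp_series (poly_inf_mat F J))"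
  by (rule fps_ext) (simp add: moment_fps_def moment_linear_statistic)

end

theorem mainTheorem1:
  fixes S :: "'a measure" and \<xi> :: "'a \<Rightarrow> nat \<Rightarrow> real" and \<mu> :: "real measure"
    and P Q :: "nat \<Rightarrow> real \<Rightarrow> real" and J :: "nat \<Rightarrow> nat \<Rightarrow> real"
    and W N n :: nat and F :: "real poly"
  assumes "prob_space S"
    and "sets \<mu> = sets borel" and "sigma_finite_measure \<mu>"
    and "\<forall>k m. integrable \<mu> (\<lambda>x. P k x * Q m x)
               \<and> (\<integral>x. P k x * Q m x \<partial>\<mu>) = (if k = m then 1 else 0)"
    and "distributed S (PiM {..<N} (\<lambda>_. \<mu>)) \<xi>
           (\<lambda>x. ennreal (det (Matrix.mat N N (\<lambda>(i, j). biorth_kernel P Q N (x i) (x j))) / fact N))"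
    and "W > 0" and "\<forall>i j. int W \<le> \<bar>int i - int j\<bar> \<longrightarrow> J i j = 0"
    and "\<forall>x i. x * P i x = (\<Sum>j<i + W. J i j * P j x)"
    and "n \<ge> 2"
  shows "cumulant S (\<lambda>\<omega>. \<Sum>k<N. poly F (\<xi> \<omega> k)) n =
    (\<Sum>ns\<in>Lambda_set n. mho n ns *
       (\<Sum>\<pi>\<in>Gamma_set n ns N (poly_inf_mat F J).
          \<Prod>i\<in>{1..n}. poly_inf_mat F J (\<pi> ! i) (\<pi> ! (i - 1))))"
proof -
  interpret biorthogonal_ensemble S \<xi> \<mu> P Q J W N F
    using assms by (simp add: biorthogonal_ensemble_def)
  show ?thesis
    unfolding cumulant_def moment_fps_linear_statistic
    by (rule fps_ln_fmat_det_exp_series_eq_Gamma_sum[OF banded_poly_J \<open>n \<ge> 2\<close>])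
qed

end
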